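(* For all safe circuits $c,d:a\to b$, if $c$ and $d$ are equal modulo $E$, then $\widetilde{R}[c]$ and $\widetilde{R}[d]$ are equal modulo $E$.
   Context: A circuit is a morphism of the free symmetric strict monoidal category whose objects are natural numbers (tensor = addition) generated by $\mathsf{discard}:1\to 0$, $\mathsf{copy}:1\to 2$, $\mathsf{zero}:0\to1$, $\mathsf{add}:2\to1$, $\mathsf{one}:0\to 1$, $\mathsf{and}:2\to 1$. Composition is diagrammatic ($f;g$ = first $f$ then $g$), $\sigma_{m,n}$ is the symmetry $m+n\to n+m$ ($\sigma=\sigma_{1,1}$), $\mathsf{copy}_n:n\to2n$, $\mathsf{discard}_n:n\to0$ are the evident composites. $E$ is the set of equations: $\mathsf{copy};\sigma=\mathsf{copy}$; $\mathsf{copy};(\mathsf{copy}\otimes \mathrm{id}_1)=\mathsf{copy};(\mathrm{id}_1\otimes\mathsf{copy})$; $\mathsf{copy};(\mathsf{discard}\otimes\mathrm{id}_1)=\mathrm{id}_1$; for every circuit $f:a\to b$, $f;\mathsf{copy}_b=\mathsf{copy}_a;(f\otimes f)$ and $f;\mathsf{discard}_b=\mathsf{discard}_a$; commutativity, associativity and unit laws for $(\mathsf{add},\mathsf{zero})$ and for $(\mathsf{and},\mathsf{one})$; $\mathsf{copy};\mathsf{and}=\mathrm{id}_1$; $\mathsf{copy};\mathsf{add}=\mathsf{discard};\mathsf{zero}$; and distributivity $(\mathrm{id}_1\otimes\mathsf{add});\mathsf{and}=(\mathsf{copy}\otimes\mathrm{id}_2);(\mathrm{id}_1\otimes\sigma\otimes\mathrm{id}_1);(\mathsf{and}\otimes\mathsf{and});\mathsf{add}$.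 "Equal modulo $E$" means related by the smallest congruence (w.r.t. composition and tensor, including the symmetric monoidal laws) containing $E$. Safety: view a circuit as a directed graph whose nodes are wires and whose edges go from each input wire of a generator occurrence to each of its output wires; a circuit $c$ is safe if for every occurrence of $\mathsf{and}$ in $c$, no input port of $c$ reaches both input ports of that $\mathsf{and}$ by forward paths. For each circuit $f:a\to b$ the circuit $\widetilde{R}[f]:a+b\to a$ is defined inductively: $\widetilde{R}[\mathsf{discard}]=\mathsf{discard};\mathsf{zero}$; $\widetilde{R}[\mathsf{copy}]=\mathsf{discard}\otimes\mathsf{add}$; $\widetilde{R}[\mathsf{zero}]=\mathsf{discard}$; $\widetilde{R}[\mathsf{one}]=\mathsf{discard}$; $\widetilde{R}[\mathsf{add}]=\mathsf{discard}\otimes\mathsf{discard}\otimes\mathsf{copy}$; $\widetilde{R}[\mathsf{and}]=(\sigma\otimes\mathsf{copy});(\mathrm{id}_1\otimes\sigma\otimes\mathrm{id}_1);(\mathsf{and}\otimes\mathsf{and})$; $\widetilde{R}[\mathrm{id}_n]=\mathsf{discard}_n\otimes\mathrm{id}_n$; $\widetilde{R}[\sigma_{m,n}]=\mathsf{discard}_{m+n}\otimes\sigma_{n,m}$; for $f:a\to b$, $g:b\to c$, $\widetilde{R}[f;g]=(\mathsf{copy}_a\otimes\mathrm{id}_c);(\mathrm{id}_a\otimes f\otimes \mathrm{id}_c);(\mathrm{id}_a\otimes\widetilde{R}[g]);\widetilde{R}[f]$; for $f:a\to b$, $g:c\to d$, $\widetilde{R}[f\otimes g]=(\mathrm{id}_a\otimes\sigma_{c,b}\otimes\mathrm{id}_d);(\widetilde{R}[f]\otimes\widetilde{R}[g])$.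 *)

theory Defs
  imports Main
begin

datatype gen = Discard | Copy | Zero | Add | One | And

datatype circ = CGen gen | CId nat | CSym nat nat | CSeq circ circ | CPar circ circ

fun gdom :: "gen \<Rightarrow> nat" where
  "gdom Discard = 1" | "gdom Copy = 1" | "gdom Zero = 0"
| "gdom Add = 2" | "gdom One = 0" | "gdom And = 2"

fun gcod :: "gen \<Rightarrow> nat" where
  "gcod Discard = 0" | "gcod Copy = 2" | "gcod Zero = 1"
| "gcod Add = 1" | "gcod One = 1" | "gcod And = 1"

fun cdom :: "circ \<Rightarrow> nat" where
  "cdom (CGen g) = gdom g"
| "cdom (CId n) = n"
| "cdom (CSym m n) = m + n"
| "cdom (CSeq f g) = cdom f"
| "cdom (CPar f g) = cdom f + cdom g"

fun ccod :: "circ \<Rightarrow> nat" where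
  "ccod (CGen g) = gcod g"
| "ccod (CId n) = n"
| "ccod (CSym m n) = n + m"
| "ccod (CSeq f g) = ccod g"
| "ccod (CPar f g) = ccod f + ccod g"

fun wf :: "circ \<Rightarrow> bool" where
  "wf (CGen g) = True"
| "wf (CId n) = True"
| "wf (CSym m n) = True"
| "wf (CSeq f g) = (wf f \<and> wf g \<and> ccod f = cdom g)"
| "wf (CPar f g) = (wf f \<and> wf g)"

definition typed :: "circ \<Rightarrow> nat \<Rightarrow> nat \<Rightarrow> bool" where
  "typed f a b \<longleftrightarrow> wf f \<and> cdom f = a \<and> ccod f = b"

abbreviation "discardc \<equiv> CGen Discard"
abbreviation "copyc \<equiv> CGen Copy"
abbreviation "zeroc \<equiv> CGen Zero"
abbreviation "addc \<equiv> CGen Add"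
abbreviation "onec \<equiv> CGen One"
abbreviation "andc \<equiv> CGen And"
abbreviation "sigma \<equiv> CSym 1 1"

text \<open>copy_n : n -> 2n (outputs x1..xn,x1..xn) and discard_n : n -> 0.\<close>
fun copyn :: "nat \<Rightarrow> circ" where
  "copyn 0 = CId 0"
| "copyn (Suc n) = CSeq (CPar copyc (copyn n)) (CPar (CPar (CId 1) (CSym 1 n)) (CId n))"

fun discardn :: "nat \<Rightarrow> circ" where
  "discardn 0 = CId 0"
| "discardn (Suc n) = CPar discardc (discardn n)"

inductive axE :: "circ \<Rightarrow> circ \<Rightarrow> bool" where
  seq_assoc: "typed f a b \<Longrightarrow> typed g b c \<Longrightarrow> typed h c d \<Longrightarrow>
     axE (CSeq (CSeq f g) h) (CSeq f (CSeq g h))"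
| seq_idl: "typed f a b \<Longrightarrow> axE (CSeq (CId a) f) f"
| seq_idr: "typed f a b \<Longrightarrow> axE (CSeq f (CId b)) f"
| par_assoc: "wf f \<Longrightarrow> wf g \<Longrightarrow> wf h \<Longrightarrow> axE (CPar (CPar f g) h) (CPar f (CPar g h))"
| par_unitl: "wf f \<Longrightarrow> axE (CPar (CId 0) f) f"
| par_unitr: "wf f \<Longrightarrow> axE (CPar f (CId 0)) f"
| interchange: "typed f a b \<Longrightarrow> typed g b c \<Longrightarrow> typed h d e \<Longrightarrow> typed k e x \<Longrightarrow>
     axE (CPar (CSeq f g) (CSeq h k)) (CSeq (CPar f h) (CPar g k))"
| par_id: "axE (CPar (CId m) (CId n)) (CId (m + n))"
| sym_inv: "axE (CSeq (CSym m n) (CSym n m)) (CId (m + n))"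
| sym_nat: "typed f a b \<Longrightarrow> typed g c d \<Longrightarrow>
     axE (CSeq (CPar f g) (CSym b d)) (CSeq (CSym a c) (CPar g f))"
| sym_hex1: "axE (CSym m (n + k)) (CSeq (CPar (CSym m n) (CId k)) (CPar (CId n) (CSym m k)))"
| sym_hex2: "axE (CSym (m + n) k) (CSeq (CPar (CId m) (CSym n k)) (CPar (CSym m k) (CId n)))"
| sym_unitr: "axE (CSym m 0) (CId m)"
| sym_unitl: "axE (CSym 0 m) (CId m)"
| copy_comm: "axE (CSeq copyc sigma) copyc"
| copy_assoc: "axE (CSeq copyc (CPar copyc (CId 1))) (CSeq copyc (CPar (CId 1) copyc))"
| copy_unit: "axE (CSeq copyc (CPar discardc (CId 1))) (CId 1)"
| copy_nat: "typed f a b \<Longrightarrow> axE (CSeq f (copyn b)) (CSeq (copyn a) (CPar f f))"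
| discard_nat: "typed f a b \<Longrightarrow> axE (CSeq f (discardn b)) (discardn a)"
| add_comm: "axE (CSeq sigma addc) addc"
| add_assoc: "axE (CSeq (CPar addc (CId 1)) addc) (CSeq (CPar (CId 1) addc) addc)"
| add_unitl: "axE (CSeq (CPar zeroc (CId 1)) addc) (CId 1)"
| add_unitr: "axE (CSeq (CPar (CId 1) zeroc) addc) (CId 1)"
| and_comm: "axE (CSeq sigma andc) andc"
| and_assoc: "axE (CSeq (CPar andc (CId 1)) andc) (CSeq (CPar (CId 1) andc) andc)"
| and_unitl: "axE (CSeq (CPar onec (CId 1)) andc) (CId 1)"
| and_unitr: "axE (CSeq (CPar (CId 1) onec) andc) (CId 1)"
| copy_and: "axE (CSeq copyc andc) (CId 1)"
| copy_add: "axE (CSeq copyc addc) (CSeq discardc zeroc)"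
| distrib: "axE (CSeq (CPar (CId 1) addc) andc)
     (CSeq (CSeq (CSeq (CPar copyc (CId 2)) (CPar (CPar (CId 1) sigma) (CId 1))) (CPar andc andc)) addc)"

inductive eqE :: "circ \<Rightarrow> circ \<Rightarrow> bool" where
  ax: "axE c d \<Longrightarrow> eqE c d"
| refl: "wf c \<Longrightarrow> eqE c c"
| sym: "eqE c d \<Longrightarrow> eqE d c"
| trans: "eqE c d \<Longrightarrow> eqE d e \<Longrightarrow> eqE c e"
| seq: "eqE f f' \<Longrightarrow> eqE g g' \<Longrightarrow> ccod f = cdom g \<Longrightarrow> eqE (CSeq f g) (CSeq f' g')"
| par: "eqE f f' \<Longrightarrow> eqE g g' \<Longrightarrow> eqE (CPar f g) (CPar f' g')"

text \<open>reach c: input port i of c reaches output port j of c by a forward path in the wire graph.\<close>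
fun greach :: "gen \<Rightarrow> (nat \<times> nat) set" where
  "greach Discard = {}"
| "greach Copy = {(0,0),(0,1)}"
| "greach Zero = {}"
| "greach Add = {(0,0),(1,0)}"
| "greach One = {}"
| "greach And = {(0,0),(1,0)}"

fun reach :: "circ \<Rightarrow> (nat \<times> nat) set" where
  "reach (CGen g) = greach g"
| "reach (CId n) = {(i, i) | i. i < n}"
| "reach (CSym m n) = {(i, n + i) | i. i < m} \<union> {(m + j, j) | j. j < n}"
| "reach (CSeq f g) = reach f O reach g"
| "reach (CPar f g) = reach f \<union> {(cdom f + i, ccod f + j) | i j. (i, j) \<in> reach g}"

definition pre :: "circ \<Rightarrow> nat set \<Rightarrow> nat set" where
  "pre f A = {i. \<exists>k\<in>A. (i, k) \<in> reach f}"

text \<open>For every occurrence of and in c: the sets of input ports of c reaching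
  its first and its second input port.\<close>
fun andreach :: "circ \<Rightarrow> (nat set \<times> nat set) list" where
  "andreach (CGen g) = (if g = And then [({0}, {1})] else [])"
| "andreach (CId n) = []"
| "andreach (CSym m n) = []"
| "andreach (CSeq f g) = andreach f @ map (\<lambda>(A, B). (pre f A, pre f B)) (andreach g)"
| "andreach (CPar f g) = andreach f @ map (\<lambda>(A, B). ((+) (cdom f) ` A, (+) (cdom f) ` B)) (andreach g)"

definition safe :: "circ \<Rightarrow> bool" where
  "safe c \<longleftrightarrow> (\<forall>(A, B) \<in> set (andreach c). A \<inter> B = {})"

fun Rt :: "circ \<Rightarrow> circ" where
  "Rt (CGen Discard) = CSeq discardc zeroc"
| "Rt (CGen Copy) = CPar discardc addc"
| "Rt (CGen Zero) = discardc"
| "Rt (CGen One) = discardc"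
| "Rt (CGen Add) = CPar (CPar discardc discardc) copyc"
| "Rt (CGen And) = CSeq (CSeq (CPar sigma copyc) (CPar (CPar (CId 1) sigma) (CId 1))) (CPar andc andc)"
| "Rt (CId n) = CPar (discardn n) (CId n)"
| "Rt (CSym m n) = CPar (discardn (m + n)) (CSym n m)"
| "Rt (CSeq f g) =
     CSeq (CSeq (CSeq (CPar (copyn (cdom f)) (CId (ccod g)))
                      (CPar (CPar (CId (cdom f)) f) (CId (ccod g))))
                (CPar (CId (cdom f)) (Rt g)))
          (Rt f)"
| "Rt (CPar f g) =
     CSeq (CPar (CPar (CId (cdom f)) (CSym (cdom g) (ccod f))) (CId (ccod g)))
          (CPar (Rt f) (Rt g))"

end

theory Submission
  imports Defs
begin

(* Both sides are compared through the Boolean semantics, in which add computes exclusive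
   or and the and-gate conjunction. The equations E are sound for it, and they are also complete:
   modulo E a circuit n -> m is the tuple of its m output components, each component is
   the denotation of a Boolean-ring term in the inputs, and E makes the morphisms n -> 1
   a Boolean ring, so Shannon expansion reduces equality of two denotations to equality
   of their truth tables.
   It therefore suffices that the function computed by R[c] depends only on the function
   computed by c when c is safe. This holds because R[c](x, dy) is the adjoint of the
   finite difference of c: <dy, c(x + v) + c(x)> = <v, R[c](x, dy)> as long as no
   and-gate of c sees inputs from the support of v on both of its ports. Safety gives
   this for every unit vector v = e_i, and these determine R[c](x, dy). *)

section \<open>Boolean semantics\<close>

fun gen_sem :: "gen \<Rightarrow> bool list \<Rightarrow> bool list" where
  "gen_sem Discard xs = []"
| "gen_sem Copy xs = [xs!0, xs!0]"
| "gen_sem Zero xs = [False]"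
| "gen_sem Add xs = [xs!0 \<noteq> xs!1]"
| "gen_sem One xs = [True]"
| "gen_sem And xs = [xs!0 \<and> xs!1]"

fun sem :: "circ \<Rightarrow> bool list \<Rightarrow> bool list" where
  "sem (CGen g) xs = gen_sem g xs"
| "sem (CId n) xs = xs"
| "sem (CSym m n) xs = drop m xs @ take m xs"
| "sem (CSeq f g) xs = sem g (sem f xs)"
| "sem (CPar f g) xs = sem f (take (cdom f) xs) @ sem g (drop (cdom f) xs)"

lemma length_sem: "wf c \<Longrightarrow> length xs = cdom c \<Longrightarrow> length (sem c xs) = ccod c"
proof (induction c arbitrary: xs)
  case (CGen g) then show ?case by (cases g) auto
qed auto

lemma copyn_simps [simp]: "wf (copyn n)" "cdom (copyn n) = n" "ccod (copyn n) = n + n"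
  by (induction n) auto

lemma discardn_simps [simp]: "wf (discardn n)" "cdom (discardn n) = n" "ccod (discardn n) = 0"
  by (induction n) auto

lemma sem_copyn: "length xs = n \<Longrightarrow> sem (copyn n) xs = xs @ xs"
  by (induction n arbitrary: xs) (auto simp: length_Suc_conv)

lemma sem_discardn: "length xs = n \<Longrightarrow> sem (discardn n) xs = []"
  by (induction n arbitrary: xs) auto

definition sem_eq :: "circ \<Rightarrow> circ \<Rightarrow> bool" where
  "sem_eq c d \<longleftrightarrow> wf c \<and> wf d \<and> cdom c = cdom d \<and> ccod c = ccod d \<and>
     (\<forall>xs. length xs = cdom c \<longrightarrow> sem c xs = sem d xs)"

lemma list_split2:
  assumes "length xs = m + n"
  obtains A B where "xs = A @ B" "length A = m" "length B = n"
proof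
  show "xs = take m xs @ drop m xs" by simp
qed (use assms in auto)

lemma list_split3:
  assumes "length xs = m + n + k"
  obtains A B C where "xs = A @ B @ C" "length A = m" "length B = n" "length C = k"
proof
  show "xs = take m xs @ take n (drop m xs) @ drop (m + n) xs"
    by (metis append.assoc append_take_drop_id take_add)
qed (use assms in auto)

lemma axE_sem_eq: "axE c d \<Longrightarrow> sem_eq c d"
proof (induction rule: axE.induct)
  case (sym_hex1 m n k)
  show ?case unfolding sem_eq_def
    by (auto simp flip: add.assoc elim!: list_split3[of _ m n k])
next
  case (sym_hex2 m n k)
  show ?case unfolding sem_eq_def
    by (auto elim!: list_split3[of _ m n k])
qed (auto simp: sem_eq_def typed_def length_sem sem_copyn sem_discardn length_Suc_conv
    numeral_2_eq_2 numeral_3_eq_3 take_add drop_take add.commute)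

lemma eqE_sem_eq: "eqE c d \<Longrightarrow> sem_eq c d"
proof (induction rule: eqE.induct)
  case (ax c d) then show ?case by (rule axE_sem_eq)
qed (auto simp: sem_eq_def length_sem)

section \<open>The reverse derivative as adjoint of the finite difference\<close>

definition vxor :: "bool list \<Rightarrow> bool list \<Rightarrow> bool list" where
  "vxor xs ys = map2 (\<noteq>) xs ys"

fun vdot :: "bool list \<Rightarrow> bool list \<Rightarrow> bool" where
  "vdot (x # xs) (y # ys) = ((x \<and> y) \<noteq> vdot xs ys)"
| "vdot _ _ = False"

lemma length_vxor [simp]: "length (vxor a b) = min (length a) (length b)"
  by (simp add: vxor_def)

lemma nth_vxor [simp]: "i < length a \<Longrightarrow> i < length b \<Longrightarrow> vxor a b ! i = (a ! i \<noteq> b ! i)"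
  by (simp add: vxor_def)

lemma vxor_append: "length a = length c \<Longrightarrow> vxor (a @ b) (c @ d) = vxor a c @ vxor b d"
  by (simp add: vxor_def)

lemma vxor_cancel_right: "length a = length b \<Longrightarrow> vxor (vxor a b) a = b"
  by (rule nth_equalityI) auto

lemma vdot_append: "length a = length c \<Longrightarrow> vdot (a @ b) (c @ d) = (vdot a c \<noteq> vdot b d)"
  by (induction a c rule: vdot.induct) auto

lemma vdot_commute: "vdot a b = vdot b a"
  by (induction a b rule: vdot.induct) (auto elim: vdot.elims)

lemma vdot_replicate_False: "\<not> vdot (replicate n False) r"
proof (induction n arbitrary: r)
  case (Suc n) then show ?case by (cases r) auto
qed simp

lemma vdot_unit: "length r = n \<Longrightarrow> i < n \<Longrightarrow> vdot ((replicate n False)[i := True]) r = r ! i"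
proof (induction r arbitrary: n i)
  case (Cons x r)
  then show ?case by (cases n; cases i) (auto simp: vdot_replicate_False)
qed simp

definition supp_within :: "bool list \<Rightarrow> nat set \<Rightarrow> bool" where
  "supp_within v J \<longleftrightarrow> (\<forall>i<length v. v ! i \<longrightarrow> i \<in> J)"

lemma supp_within_append:
  "supp_within (a @ b) J \<longleftrightarrow> supp_within a J \<and> supp_within b {j. length a + j \<in> J}"
  by (auto simp: supp_within_def nth_append) (metis add_diff_inverse_nat nat_add_left_cancel_less)

lemma supp_within_mono: "supp_within v J \<Longrightarrow> J \<subseteq> K \<Longrightarrow> supp_within v K"
  by (auto simp: supp_within_def)

lemma supp_within_unit: "supp_within ((replicate n False)[i := True]) {i}"
  unfolding supp_within_def
proof (intro allI impI)
  fix j assume "j < length ((replicate n False)[i := True])" "(replicate n False)[i := True] ! j"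
  then show "j \<in> {i}" by (cases "j = i") auto
qed

definition sem_diff :: "circ \<Rightarrow> bool list \<Rightarrow> bool list \<Rightarrow> bool list" where
  "sem_diff c y v = vxor (sem c (vxor y v)) (sem c y)"

lemma length_sem_diff:
  "wf c \<Longrightarrow> length y = cdom c \<Longrightarrow> length v = cdom c \<Longrightarrow> length (sem_diff c y v) = ccod c"
  by (simp add: sem_diff_def length_sem)

lemma sem_diff_CSeq:
  assumes "wf f" "length y = cdom f" "length v = cdom f"
  shows "sem_diff (CSeq f g) y v = sem_diff g (sem f y) (sem_diff f y v)"
proof -
  have "sem f (vxor y v) = vxor (sem f y) (sem_diff f y v)"
    using assms by (intro nth_equalityI) (auto simp: sem_diff_def length_sem)
  then show ?thesis by (simp add: sem_diff_def)
qed

lemma sem_diff_CPar: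
  assumes "wf f" "length y1 = cdom f" "length v1 = cdom f" "length y2 = cdom g" "length v2 = cdom g"
  shows "sem_diff (CPar f g) (y1 @ y2) (v1 @ v2) = sem_diff f y1 v1 @ sem_diff g y2 v2"
  using assms by (simp add: sem_diff_def vxor_append length_sem)

lemma supp_within_sem_diff:
  "wf c \<Longrightarrow> length y = cdom c \<Longrightarrow> length v = cdom c \<Longrightarrow> supp_within v J \<Longrightarrow>
    supp_within (sem_diff c y v) (reach c `` J)"
proof (induction c arbitrary: y v J)
  case (CGen g)
  then show ?case
    by (cases g) (auto simp: sem_diff_def supp_within_def length_Suc_conv numeral_2_eq_2 less_Suc_eq)
next
  case (CId n)
  then show ?case by (auto simp: sem_diff_def supp_within_def)
next
  case (CSym m n)
  have "i \<in> reach (CSym m n) `` J" if "i < n" "m + i \<in> J" for i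
    using that by auto
  moreover have "i \<in> reach (CSym m n) `` J" if "n \<le> i" "i < n + m" "i - n \<in> J" for i
    using that by (auto intro!: ImageI[of "i - n"])
  ultimately show ?case using CSym.prems
    by (auto simp del: reach.simps simp: sem_diff_def supp_within_def nth_append min_def not_less)
next
  case (CSeq f g)
  then show ?case by (simp add: sem_diff_CSeq length_sem length_sem_diff relcomp_Image)
next
  case (CPar f g)
  obtain y1 y2 where y: "y = y1 @ y2" "length y1 = cdom f" "length y2 = cdom g"
    using CPar.prems(2) by (auto elim: list_split2)
  obtain v1 v2 where v: "v = v1 @ v2" "length v1 = cdom f" "length v2 = cdom g"
    using CPar.prems(3) by (auto elim: list_split2)
  let ?K = "reach (CPar f g) `` J"
  have "supp_within (sem_diff f y1 v1) ?K"
    by (rule supp_within_mono[OF CPar.IH(1)]) (use CPar.prems v y in \<open>auto simp: supp_within_append\<close>)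
  moreover have "supp_within (sem_diff g y2 v2) {j. ccod f + j \<in> ?K}"
    by (rule supp_within_mono[OF CPar.IH(2)]) (use CPar.prems v y in \<open>auto simp: supp_within_append\<close>)
  ultimately show ?case
    using CPar.prems v y by (simp add: sem_diff_CPar supp_within_append length_sem_diff)
qed

(* No and-gate of c receives inputs from J on both of its ports, so c is affine in the
   inputs J. *)

definition affine_in :: "circ \<Rightarrow> nat set \<Rightarrow> bool" where
  "affine_in c J \<longleftrightarrow> (\<forall>p \<in> set (andreach c). fst p \<inter> J = {} \<or> snd p \<inter> J = {})"

lemma pre_disjoint_iff: "pre f A \<inter> J = {} \<longleftrightarrow> A \<inter> reach f `` J = {}"
  by (auto simp: pre_def)

lemma affine_in_CSeqD:
  assumes "affine_in (CSeq f g) J"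
  shows "affine_in f J" "affine_in g (reach f `` J)"
proof -
  show "affine_in f J" using assms by (simp add: affine_in_def)
  show "affine_in g (reach f `` J)" unfolding affine_in_def
  proof
    fix p assume "p \<in> set (andreach g)"
    then have "(pre f (fst p), pre f (snd p)) \<in> set (andreach (CSeq f g))"
      by (force simp: case_prod_beta)
    from assms[unfolded affine_in_def, rule_format, OF this]
    show "fst p \<inter> reach f `` J = {} \<or> snd p \<inter> reach f `` J = {}"
      by (simp add: pre_disjoint_iff)
  qed
qed

lemma affine_in_CParD:
  assumes "affine_in (CPar f g) J"
  shows "affine_in f J" "affine_in g {j. cdom f + j \<in> J}"
proof -
  show "affine_in f J" using assms by (simp add: affine_in_def)
  show "affine_in g {j. cdom f + j \<in> J}" unfolding affine_in_def
  proof
    fix p assume "p \<in> set (andreach g)"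
    then have "((+) (cdom f) ` fst p, (+) (cdom f) ` snd p) \<in> set (andreach (CPar f g))"
      by (force simp: case_prod_beta)
    from assms[unfolded affine_in_def, rule_format, OF this]
    show "fst p \<inter> {j. cdom f + j \<in> J} = {} \<or> snd p \<inter> {j. cdom f + j \<in> J} = {}"
      by auto
  qed
qed

lemma safe_affine_in_singleton:
  assumes "safe c"
  shows "affine_in c {i}"
  unfolding affine_in_def
proof
  fix p assume "p \<in> set (andreach c)"
  with assms have "fst p \<inter> snd p = {}" by (auto simp: safe_def case_prod_beta)
  then show "fst p \<inter> {i} = {} \<or> snd p \<inter> {i} = {}" by blast
qed

lemma Rt_typing: "wf c \<Longrightarrow> wf (Rt c) \<and> cdom (Rt c) = cdom c + ccod c \<and> ccod (Rt c) = cdom c"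
  by (induction c rule: Rt.induct) auto

lemma sem_Rt_CSeq:
  assumes "wf f" "wf g" "ccod f = cdom g" "length y = cdom f" "length dz = ccod g"
  shows "sem (Rt (CSeq f g)) (y @ dz) = sem (Rt f) (y @ sem (Rt g) (sem f y @ dz))"
  using assms Rt_typing[of g] length_sem[of f y] by (simp add: sem_copyn)

lemma sem_Rt_CPar:
  assumes "wf f" "wf g" "length y1 = cdom f" "length y2 = cdom g"
    "length dz1 = ccod f" "length dz2 = ccod g"
  shows "sem (Rt (CPar f g)) (y1 @ y2 @ dz1 @ dz2) = sem (Rt f) (y1 @ dz1) @ sem (Rt g) (y2 @ dz2)"
  using assms Rt_typing[of f] Rt_typing[of g] by simp

declare Rt.simps [simp del]

lemma Rt_adjoint_CGen:
  assumes "length y = gdom g" "length v = gdom g" "length dz = gcod g"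
    and "supp_within v J" "affine_in (CGen g) J"
  shows "vdot dz (sem_diff (CGen g) y v) = vdot v (sem (Rt (CGen g)) (y @ dz))"
proof (cases g)
  case And
  obtain y0 y1 v0 v1 d where lists: "y = [y0, y1]" "v = [v0, v1]" "dz = [d]"
    using assms And by (auto simp: numeral_2_eq_2 length_Suc_conv)
  have "\<not> v0 \<or> \<not> v1"
    using assms(4,5) And lists by (auto simp: supp_within_def affine_in_def)
  with And lists show ?thesis
    by (auto simp: Rt.simps sem_diff_def vxor_def)
qed (use assms in \<open>auto simp: Rt.simps sem_diff_def vxor_def length_Suc_conv numeral_2_eq_2\<close>)

lemma Rt_adjoint_CSym:
  assumes "length y = m + n" "length v = m + n" "length dz = n + m"
  shows "vdot dz (sem_diff (CSym m n) y v) = vdot v (sem (Rt (CSym m n)) (y @ dz))"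
proof -
  obtain A B where v: "v = A @ B" "length A = m" "length B = n"
    using assms by (auto elim: list_split2)
  obtain Y1 Y2 where y: "y = Y1 @ Y2" "length Y1 = m" "length Y2 = n"
    using assms by (auto elim: list_split2)
  obtain C D where dz: "dz = C @ D" "length C = n" "length D = m"
    using assms by (auto elim: list_split2)
  show ?thesis using v y dz
    by (simp add: Rt.simps sem_diff_def sem_discardn vxor_append vxor_cancel_right vdot_append vdot_commute)
       blast
qed

lemma Rt_adjoint:
  assumes "wf c" "length y = cdom c" "length v = cdom c" "length dz = ccod c"
    "supp_within v J" "affine_in c J"
  shows "vdot dz (sem_diff c y v) = vdot v (sem (Rt c) (y @ dz))"
  using assms
proof (induction c arbitrary: y v dz J)
  case (CGen g) then show ?case by (simp add: Rt_adjoint_CGen)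
next
  case (CId n)
  then show ?case
    by (simp add: Rt.simps sem_diff_def sem_discardn vxor_cancel_right vdot_commute)
next
  case (CSym m n) then show ?case by (simp add: Rt_adjoint_CSym)
next
  case (CSeq f g)
  let ?w = "sem_diff f y v"
  have typed: "wf f" "wf g" "ccod f = cdom g" using CSeq.prems(1) by simp_all
  have affine: "affine_in f J" "affine_in g (reach f `` J)"
    using affine_in_CSeqD[OF CSeq.prems(6)] by simp_all
  have "vdot dz (sem_diff (CSeq f g) y v) = vdot dz (sem_diff g (sem f y) ?w)"
    using CSeq.prems typed by (simp add: sem_diff_CSeq)
  also have "\<dots> = vdot (sem (Rt g) (sem f y @ dz)) ?w"
    using CSeq.IH(2)[OF _ _ _ _ supp_within_sem_diff affine(2)] CSeq.prems typed
    by (simp add: length_sem length_sem_diff vdot_commute)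
  also have "\<dots> = vdot v (sem (Rt f) (y @ sem (Rt g) (sem f y @ dz)))"
    using CSeq.IH(1)[OF _ _ _ _ _ affine(1)] CSeq.prems typed Rt_typing[of g]
    by (simp add: length_sem)
  also have "\<dots> = vdot v (sem (Rt (CSeq f g)) (y @ dz))"
    using CSeq.prems typed by (simp add: sem_Rt_CSeq)
  finally show ?case .
next
  case (CPar f g)
  obtain v1 v2 where v: "v = v1 @ v2" "length v1 = cdom f" "length v2 = cdom g"
    using CPar.prems(3) by (auto elim: list_split2)
  obtain y1 y2 where y: "y = y1 @ y2" "length y1 = cdom f" "length y2 = cdom g"
    using CPar.prems(2) by (auto elim: list_split2)
  obtain d1 d2 where dz: "dz = d1 @ d2" "length d1 = ccod f" "length d2 = ccod g"
    using CPar.prems(4) by (auto elim: list_split2)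
  have typed: "wf f" "wf g" using CPar.prems(1) by simp_all
  have affine: "affine_in f J" "affine_in g {j. cdom f + j \<in> J}"
    using affine_in_CParD[OF CPar.prems(6)] by simp_all
  have supp: "supp_within v1 J" "supp_within v2 {j. cdom f + j \<in> J}"
    using CPar.prems(5) v by (simp_all add: supp_within_append)
  have "vdot dz (sem_diff (CPar f g) y v) =
      (vdot d1 (sem_diff f y1 v1) \<noteq> vdot d2 (sem_diff g y2 v2))"
    using typed v y dz by (simp add: sem_diff_CPar vdot_append length_sem_diff)
  also have "\<dots> = (vdot v1 (sem (Rt f) (y1 @ d1)) \<noteq> vdot v2 (sem (Rt g) (y2 @ d2)))"
    using CPar.IH(1)[OF _ _ _ _ supp(1) affine(1)] CPar.IH(2)[OF _ _ _ _ supp(2) affine(2)]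
      typed v y dz by simp
  also have "\<dots> = vdot v (sem (Rt (CPar f g)) (y @ dz))"
    using typed v y dz Rt_typing[of f] by (simp add: sem_Rt_CPar vdot_append length_sem)
  finally show ?case .
qed

lemma safe_sem_Rt_cong:
  assumes "typed c a b" "typed d a b" "safe c" "safe d"
    and "\<forall>xs. length xs = a \<longrightarrow> sem c xs = sem d xs"
    and "length zs = a + b"
  shows "sem (Rt c) zs = sem (Rt d) zs"
proof (rule nth_equalityI)
  obtain x dy where z: "zs = x @ dy" "length x = a" "length dy = b"
    using assms(6) by (auto elim: list_split2)
  have c: "wf c" "cdom c = a" "ccod c = b" and d: "wf d" "cdom d = a" "ccod d = b"
    using assms(1,2) unfolding typed_def by auto
  have len_c: "length (sem (Rt c) zs) = a" and len_d: "length (sem (Rt d) zs) = a"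
    using Rt_typing[of c] Rt_typing[of d] c d assms(6) by (simp_all add: length_sem)
  then show "length (sem (Rt c) zs) = length (sem (Rt d) zs)" by simp
  fix i assume "i < length (sem (Rt c) zs)"
  then have i: "i < a" using len_c by simp
  define e where "e = (replicate a False)[i := True]"
  have e: "length e = a" "supp_within e {i}"
    using supp_within_unit[of a i] by (simp_all add: e_def)
  have "sem (Rt c) zs ! i = vdot e (sem (Rt c) (x @ dy))"
    using vdot_unit[OF len_c i] z by (simp add: e_def)
  also have "\<dots> = vdot dy (sem_diff c x e)"
    using Rt_adjoint[OF _ _ _ _ e(2) safe_affine_in_singleton[OF assms(3)]] c z e by simp
  also have "\<dots> = vdot dy (sem_diff d x e)"
    using assms(5) z e by (simp add: sem_diff_def)
  also have "\<dots> = vdot e (sem (Rt d) (x @ dy))"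
    using Rt_adjoint[OF _ _ _ _ e(2) safe_affine_in_singleton[OF assms(4)]] d z e by simp
  also have "\<dots> = sem (Rt d) zs ! i"
    using vdot_unit[OF len_d i] z by (simp add: e_def)
  finally show "sem (Rt c) zs ! i = sem (Rt d) zs ! i" .
qed

section \<open>Circuits modulo E\<close>

lemma eqE_wfD: "eqE c d \<Longrightarrow> wf c \<and> wf d \<and> cdom c = cdom d \<and> ccod c = ccod d"
  using eqE_sem_eq sem_eq_def by blast

lemma part_equivp_eqE: "part_equivp eqE"
proof (rule part_equivpI)
  show "\<exists>x. eqE x x" using eqE.refl[of "CId 0"] by auto
  show "symp eqE" by (auto intro: sympI eqE.sym)
  show "transp eqE" by (auto intro: transpI eqE.trans)
qed

quotient_type mor = circ / partial: eqE
  by (rule part_equivp_eqE)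

lift_definition mdom :: "mor \<Rightarrow> nat" is cdom using eqE_wfD by blast
lift_definition mcod :: "mor \<Rightarrow> nat" is ccod using eqE_wfD by blast
lift_definition Gen :: "gen \<Rightarrow> mor" is CGen by (rule eqE.refl) simp
lift_definition Ident :: "nat \<Rightarrow> mor" is CId by (rule eqE.refl) simp
lift_definition Swap :: "nat \<Rightarrow> nat \<Rightarrow> mor" is CSym by (rule eqE.refl) simp
lift_definition Comp :: "mor \<Rightarrow> mor \<Rightarrow> mor" (infixr "\<Zsemi>" 55)
  is "\<lambda>f g. if ccod f = cdom g then CSeq f g else CId 0"
  subgoal for f f' g g'
    using eqE_wfD[of f f'] eqE_wfD[of g g'] by (auto intro: eqE.seq eqE.refl)
  done

lift_definition Tensor :: "mor \<Rightarrow> mor \<Rightarrow> mor" (infixr "\<otimes>" 65) is CPar by (rule eqE.par)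
lift_definition mor_of :: "circ \<Rightarrow> mor" is "\<lambda>c. if wf c then c else CId 0"
  by (auto intro: eqE.refl)

lemma eqE_if_mor_of_eq: "wf p \<Longrightarrow> wf q \<Longrightarrow> mor_of p = mor_of q \<Longrightarrow> eqE p q"
  by transfer simp

lemma mor_of_CSeq: "wf f \<Longrightarrow> wf g \<Longrightarrow> ccod f = cdom g \<Longrightarrow> mor_of (CSeq f g) = mor_of f \<Zsemi> mor_of g"
  by transfer (auto intro: eqE.refl)

lemma mor_of_CPar: "wf f \<Longrightarrow> wf g \<Longrightarrow> mor_of (CPar f g) = mor_of f \<otimes> mor_of g"
  by transfer (auto intro: eqE.refl)

lemma mor_of_CGen: "mor_of (CGen g) = Gen g" by transfer (auto intro: eqE.refl)
lemma mor_of_CId: "mor_of (CId n) = Ident n" by transfer (auto intro: eqE.refl)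
lemma mor_of_CSym: "mor_of (CSym m n) = Swap m n" by transfer (auto intro: eqE.refl)

lemma mdom_mor_of: "wf c \<Longrightarrow> mdom (mor_of c) = cdom c" by transfer simp
lemma mcod_mor_of: "wf c \<Longrightarrow> mcod (mor_of c) = ccod c" by transfer simp

definition mcopy_n :: "nat \<Rightarrow> mor" where "mcopy_n n = mor_of (copyn n)"
definition mdiscard_n :: "nat \<Rightarrow> mor" where "mdiscard_n n = mor_of (discardn n)"

abbreviation "mdiscard \<equiv> Gen Discard"
abbreviation "mcopy \<equiv> Gen Copy"
abbreviation "mzero \<equiv> Gen Zero"
abbreviation "madd \<equiv> Gen Add"
abbreviation "mone \<equiv> Gen One"
abbreviation "mand \<equiv> Gen And"

lemma mdom_Tensor [simp]: "mdom (f \<otimes> g) = mdom f + mdom g" by transfer simp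
lemma mcod_Tensor [simp]: "mcod (f \<otimes> g) = mcod f + mcod g" by transfer simp
lemma mdom_Gen [simp]: "mdom (Gen g) = gdom g" by transfer simp
lemma mcod_Gen [simp]: "mcod (Gen g) = gcod g" by transfer simp
lemma mdom_Ident [simp]: "mdom (Ident n) = n" by transfer simp
lemma mcod_Ident [simp]: "mcod (Ident n) = n" by transfer simp
lemma mdom_Swap [simp]: "mdom (Swap m n) = m + n" by transfer simp
lemma mcod_Swap [simp]: "mcod (Swap m n) = n + m" by transfer simp
lemma mdom_Comp [simp]: "mcod f = mdom g \<Longrightarrow> mdom (f \<Zsemi> g) = mdom f" by transfer simp
lemma mcod_Comp [simp]: "mcod f = mdom g \<Longrightarrow> mcod (f \<Zsemi> g) = mcod g" by transfer simp
lemma mdom_mcopy_n [simp]: "mdom (mcopy_n n) = n" by (simp add: mcopy_n_def mdom_mor_of)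
lemma mcod_mcopy_n [simp]: "mcod (mcopy_n n) = n + n" by (simp add: mcopy_n_def mcod_mor_of)
lemma mdom_mdiscard_n [simp]: "mdom (mdiscard_n n) = n" by (simp add: mdiscard_n_def mdom_mor_of)
lemma mcod_mdiscard_n [simp]: "mcod (mdiscard_n n) = 0" by (simp add: mdiscard_n_def mcod_mor_of)

lemma mcopy_n_0: "mcopy_n 0 = Ident 0" by (simp add: mcopy_n_def mor_of_CId)

lemma mcopy_n_Suc: "mcopy_n (Suc n) = (mcopy \<otimes> mcopy_n n) \<Zsemi> ((Ident 1 \<otimes> Swap 1 n) \<otimes> Ident n)"
  unfolding mcopy_n_def by (simp add: mor_of_CSeq mor_of_CPar mor_of_CGen mor_of_CId mor_of_CSym)

lemma mdiscard_n_0: "mdiscard_n 0 = Ident 0" by (simp add: mdiscard_n_def mor_of_CId)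

lemma mdiscard_n_Suc: "mdiscard_n (Suc n) = mdiscard \<otimes> mdiscard_n n"
  unfolding mdiscard_n_def by (simp add: mor_of_CPar mor_of_CGen)

lemma Comp_assoc: "mcod f = mdom g \<Longrightarrow> mcod g = mdom h \<Longrightarrow> (f \<Zsemi> g) \<Zsemi> h = f \<Zsemi> (g \<Zsemi> h)"
  by transfer (auto intro!: eqE.ax axE.seq_assoc simp: typed_def dest: eqE_wfD)

lemma Ident_Comp: "mdom f = a \<Longrightarrow> Ident a \<Zsemi> f = f"
  by transfer (auto intro!: eqE.ax axE.seq_idl simp: typed_def dest: eqE_wfD)

lemma Comp_Ident: "mcod f = b \<Longrightarrow> f \<Zsemi> Ident b = f"
  by transfer (auto intro!: eqE.ax axE.seq_idr simp: typed_def dest: eqE_wfD)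

lemma Tensor_assoc: "(f \<otimes> g) \<otimes> h = f \<otimes> (g \<otimes> h)"
  by transfer (auto intro!: eqE.ax axE.par_assoc dest: eqE_wfD)

lemma Ident_0_Tensor: "Ident 0 \<otimes> f = f"
  by transfer (auto intro!: eqE.ax axE.par_unitl dest: eqE_wfD)

lemma Tensor_Ident_0: "f \<otimes> Ident 0 = f"
  by transfer (auto intro!: eqE.ax axE.par_unitr dest: eqE_wfD)

lemma Tensor_Comp_Tensor: "mcod f = mdom g \<Longrightarrow> mcod h = mdom k \<Longrightarrow> (f \<otimes> h) \<Zsemi> (g \<otimes> k) = (f \<Zsemi> g) \<otimes> (h \<Zsemi> k)"
  by transfer (auto intro!: eqE.sym[OF eqE.ax[OF axE.interchange]] simp: typed_def dest: eqE_wfD)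

lemma Ident_Tensor_Ident: "Ident m \<otimes> Ident n = Ident (m + n)"
  by transfer (use axE.par_id in \<open>auto intro: eqE.ax\<close>)

lemma Swap_natural: "(f \<otimes> g) \<Zsemi> Swap (mcod f) (mcod g) = Swap (mdom f) (mdom g) \<Zsemi> (g \<otimes> f)"
  by transfer (auto intro!: eqE.ax axE.sym_nat simp: typed_def dest: eqE_wfD)

lemma Swap_0_right: "Swap m 0 = Ident m"
  by transfer (use axE.sym_unitr in \<open>auto intro: eqE.ax\<close>)

lemma Swap_0_left: "Swap 0 m = Ident m"
  by transfer (use axE.sym_unitl in \<open>auto intro: eqE.ax\<close>)

lemma mcopy_commute: "mcopy \<Zsemi> Swap 1 1 = mcopy"
  by transfer (use axE.copy_comm in \<open>auto intro: eqE.ax\<close>)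

lemma mcopy_counit: "mcopy \<Zsemi> (mdiscard \<otimes> Ident 1) = Ident 1"
  by transfer (use axE.copy_unit in \<open>auto intro: eqE.ax\<close>)

lemma mcopy_natural: "f \<Zsemi> mcopy_n (mcod f) = mcopy_n (mdom f) \<Zsemi> (f \<otimes> f)"
  unfolding mcopy_n_def
  by transfer (auto intro!: eqE.ax axE.copy_nat simp: typed_def dest: eqE_wfD)

lemma mdiscard_natural: "f \<Zsemi> mdiscard_n (mcod f) = mdiscard_n (mdom f)"
  unfolding mdiscard_n_def
  by transfer (auto intro!: eqE.ax axE.discard_nat simp: typed_def dest: eqE_wfD)

lemma madd_commute: "Swap 1 1 \<Zsemi> madd = madd"
  by transfer (use axE.add_comm in \<open>auto intro: eqE.ax\<close>)

lemma madd_assoc: "(madd \<otimes> Ident 1) \<Zsemi> madd = (Ident 1 \<otimes> madd) \<Zsemi> madd"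
  by transfer (use axE.add_assoc in \<open>auto intro: eqE.ax\<close>)

lemma madd_mzero: "(mzero \<otimes> Ident 1) \<Zsemi> madd = Ident 1"
  by transfer (use axE.add_unitl in \<open>auto intro: eqE.ax\<close>)

lemma mand_commute: "Swap 1 1 \<Zsemi> mand = mand"
  by transfer (use axE.and_comm in \<open>auto intro: eqE.ax\<close>)

lemma mand_assoc: "(mand \<otimes> Ident 1) \<Zsemi> mand = (Ident 1 \<otimes> mand) \<Zsemi> mand"
  by transfer (use axE.and_assoc in \<open>auto intro: eqE.ax\<close>)

lemma mand_mone: "(mone \<otimes> Ident 1) \<Zsemi> mand = Ident 1"
  by transfer (use axE.and_unitl in \<open>auto intro: eqE.ax\<close>)

lemma mcopy_mand: "mcopy \<Zsemi> mand = Ident 1"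
  by transfer (use axE.copy_and in \<open>auto intro: eqE.ax\<close>)

lemma mcopy_madd: "mcopy \<Zsemi> madd = mdiscard \<Zsemi> mzero"
  by transfer (use axE.copy_add in \<open>auto intro: eqE.ax\<close>)

lemma mand_madd_distrib:
  "(Ident 1 \<otimes> madd) \<Zsemi> mand = (((mcopy \<otimes> Ident 2) \<Zsemi> ((Ident 1 \<otimes> Swap 1 1) \<otimes> Ident 1)) \<Zsemi> (mand \<otimes> mand)) \<Zsemi> madd"
  by transfer (use axE.distrib in \<open>auto intro: eqE.ax\<close>)

(* Keep 1 a numeral, so that facts about Ident 1, mdiscard_n 1, ... remain applicable. *)
declare One_nat_def[simp del]
lemma one_plus_Suc [simp]: "(1::nat) + n = Suc n" by simp

lemma Swap_middle_natural:
  "(X \<otimes> A \<otimes> B \<otimes> Y) \<Zsemi> (Ident (mcod X) \<otimes> Swap (mcod A) (mcod B) \<otimes> Ident (mcod Y)) =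
    (Ident (mdom X) \<otimes> Swap (mdom A) (mdom B) \<otimes> Ident (mdom Y)) \<Zsemi> (X \<otimes> B \<otimes> A \<otimes> Y)"
proof -
  have "X \<otimes> A \<otimes> B \<otimes> Y = X \<otimes> (A \<otimes> B) \<otimes> Y" "X \<otimes> B \<otimes> A \<otimes> Y = X \<otimes> (B \<otimes> A) \<otimes> Y"
    by (simp_all add: Tensor_assoc)
  then show ?thesis
    by (simp add: Tensor_Comp_Tensor Comp_Ident Ident_Comp Swap_natural)
qed

lemma mcopy_n_Suc_Tensor:
  assumes "mdom X1 = 1" "mdom X2 = 1" "mdom A = m" "mdom B = m"
  shows "mcopy_n (Suc m) \<Zsemi> ((X1 \<otimes> A) \<otimes> (X2 \<otimes> B)) =
    ((mcopy \<Zsemi> (X1 \<otimes> X2)) \<otimes> (mcopy_n m \<Zsemi> (A \<otimes> B))) \<Zsemi> (Ident (mcod X1) \<otimes> Swap (mcod X2) (mcod A) \<otimes> Ident (mcod B))"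
proof -
  have "mcopy_n (Suc m) \<Zsemi> ((X1 \<otimes> A) \<otimes> (X2 \<otimes> B)) =
     (mcopy \<otimes> mcopy_n m) \<Zsemi> ((Ident 1 \<otimes> Swap 1 m \<otimes> Ident m) \<Zsemi> (X1 \<otimes> A \<otimes> X2 \<otimes> B))"
    using assms by (simp add: mcopy_n_Suc Comp_assoc Tensor_assoc)
  also have "\<dots> = ((mcopy \<otimes> mcopy_n m) \<Zsemi> ((X1 \<otimes> X2) \<otimes> (A \<otimes> B))) \<Zsemi> (Ident (mcod X1) \<otimes> Swap (mcod X2) (mcod A) \<otimes> Ident (mcod B))"
    using Swap_middle_natural[of X1 X2 A B] assms by (simp add: Comp_assoc Tensor_assoc)
  also have "(mcopy \<otimes> mcopy_n m) \<Zsemi> ((X1 \<otimes> X2) \<otimes> (A \<otimes> B)) = (mcopy \<Zsemi> (X1 \<otimes> X2)) \<otimes> (mcopy_n m \<Zsemi> (A \<otimes> B))"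
    using assms by (simp add: Tensor_Comp_Tensor)
  finally show ?thesis .
qed

lemma mdiscard_n_1: "mdiscard_n 1 = mdiscard"
  by (simp add: One_nat_def mdiscard_n_Suc mdiscard_n_0 Tensor_Ident_0)

lemma mdiscard_n_2: "mdiscard_n 2 = mdiscard \<otimes> mdiscard"
  by (simp add: numeral_2_eq_2 mdiscard_n_Suc mdiscard_n_0 Tensor_Ident_0)

lemma mdiscard_n_add: "mdiscard_n (a + b) = mdiscard_n a \<otimes> mdiscard_n b"
  by (induction a) (simp_all add: mdiscard_n_0 mdiscard_n_Suc Ident_0_Tensor Tensor_assoc)

lemma Tensor_mdiscard_n: "mdom F = n \<Longrightarrow> F \<otimes> mdiscard_n j = (Ident n \<otimes> mdiscard_n j) \<Zsemi> F"
  using Tensor_Comp_Tensor[of "Ident n" F "mdiscard_n j" "Ident 0"]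
  by (simp add: Ident_Comp Comp_Ident Tensor_Ident_0)

lemma mdiscard_n_Tensor: "mdom F = n \<Longrightarrow> mdiscard_n j \<otimes> F = (mdiscard_n j \<otimes> Ident n) \<Zsemi> F"
  using Tensor_Comp_Tensor[of "mdiscard_n j" "Ident 0" "Ident n" F]
  by (simp add: Ident_Comp Comp_Ident Ident_0_Tensor)

lemma mcopy_counit_right: "mcopy \<Zsemi> (Ident 1 \<otimes> mdiscard) = Ident 1"
proof -
  have "mcopy \<Zsemi> (Ident 1 \<otimes> mdiscard) = (mcopy \<Zsemi> Swap 1 1) \<Zsemi> (Ident 1 \<otimes> mdiscard)"
    by (simp add: mcopy_commute)
  also have "\<dots> = mcopy \<Zsemi> (Swap 1 1 \<Zsemi> (Ident 1 \<otimes> mdiscard))" by (simp add: Comp_assoc)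
  also have "Swap 1 1 \<Zsemi> (Ident 1 \<otimes> mdiscard) = (mdiscard \<otimes> Ident 1) \<Zsemi> Swap 0 1"
    using Swap_natural[of mdiscard "Ident 1"] by simp
  also have "\<dots> = mdiscard \<otimes> Ident 1" by (simp add: Swap_0_left Comp_Ident)
  finally show ?thesis by (simp add: mcopy_counit)
qed

lemma mcopy_mdiscard_mdiscard: "mcopy \<Zsemi> (mdiscard \<otimes> mdiscard) = mdiscard"
  using mdiscard_natural[of mcopy] by (simp add: mdiscard_n_2 mdiscard_n_1)

lemma mcopy_n_Ident_mdiscard_n: "mcopy_n n \<Zsemi> (Ident n \<otimes> mdiscard_n n) = Ident n"
proof (induction n)
  case 0 then show ?case by (simp add: mcopy_n_0 mdiscard_n_0 Ident_0_Tensor Ident_Comp)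
next
  case (Suc n)
  have "mcopy_n (Suc n) \<Zsemi> (Ident (Suc n) \<otimes> mdiscard_n (Suc n)) =
      mcopy_n (Suc n) \<Zsemi> ((Ident 1 \<otimes> Ident n) \<otimes> (mdiscard \<otimes> mdiscard_n n))"
    by (simp add: mdiscard_n_Suc Ident_Tensor_Ident)
  also have "\<dots> = ((mcopy \<Zsemi> (Ident 1 \<otimes> mdiscard)) \<otimes> (mcopy_n n \<Zsemi> (Ident n \<otimes> mdiscard_n n)))
      \<Zsemi> (Ident 1 \<otimes> Swap 0 n \<otimes> Ident 0)"
    by (subst mcopy_n_Suc_Tensor) simp_all
  also have "\<dots> = Ident (Suc n)"
    by (simp add: mcopy_counit_right Suc Swap_0_left Ident_Tensor_Ident Ident_Comp)
  finally show ?case .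
qed

lemma mcopy_n_mdiscard_n_Ident: "mcopy_n n \<Zsemi> (mdiscard_n n \<otimes> Ident n) = Ident n"
proof (induction n)
  case 0 then show ?case by (simp add: mcopy_n_0 mdiscard_n_0 Ident_0_Tensor Ident_Comp)
next
  case (Suc n)
  have "mcopy_n (Suc n) \<Zsemi> (mdiscard_n (Suc n) \<otimes> Ident (Suc n)) =
      mcopy_n (Suc n) \<Zsemi> ((mdiscard \<otimes> mdiscard_n n) \<otimes> (Ident 1 \<otimes> Ident n))"
    by (simp add: mdiscard_n_Suc Ident_Tensor_Ident)
  also have "\<dots> = ((mcopy \<Zsemi> (mdiscard \<otimes> Ident 1)) \<otimes> (mcopy_n n \<Zsemi> (mdiscard_n n \<otimes> Ident n)))
      \<Zsemi> (Ident 0 \<otimes> Swap 1 0 \<otimes> Ident n)"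
    by (subst mcopy_n_Suc_Tensor) simp_all
  also have "\<dots> = Ident (Suc n)"
    by (simp add: mcopy_counit Suc Swap_0_right Ident_Tensor_Ident Ident_Comp)
  finally show ?case .
qed

lemma mcopy_n_Tensor_mdiscard_n:
  assumes "mdom h = n"
  shows "mcopy_n n \<Zsemi> (h \<otimes> mdiscard_n n) = h"
  using assms Tensor_mdiscard_n[OF assms, of n] mcopy_n_Ident_mdiscard_n[of n]
  by (simp add: Comp_assoc[symmetric] Ident_Comp)

lemma mcopy_n_Suc_mdiscard_Tensor: "mdom A = m \<Longrightarrow> mdom B = m \<Longrightarrow>
   mcopy_n (Suc m) \<Zsemi> ((mdiscard \<otimes> A) \<otimes> (mdiscard \<otimes> B)) = mdiscard \<otimes> (mcopy_n m \<Zsemi> (A \<otimes> B))"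
  by (subst mcopy_n_Suc_Tensor) (simp_all add: mcopy_mdiscard_mdiscard Swap_0_left Ident_Tensor_Ident Comp_Ident Ident_0_Tensor)

section \<open>Tuples and projections\<close>

fun Tuple :: "nat \<Rightarrow> mor list \<Rightarrow> mor" where
  "Tuple n [] = mdiscard_n n"
| "Tuple n (h # hs) = mcopy_n n \<Zsemi> (h \<otimes> Tuple n hs)"

lemma mdom_Tuple [simp]: "\<forall>h\<in>set hs. mdom h = n \<Longrightarrow> mdom (Tuple n hs) = n"
  by (induction hs) simp_all

lemma Tuple_mdiscard_Tensor:
  "\<forall>h\<in>set hs. mdom h = m \<Longrightarrow> Tuple (Suc m) (map (\<lambda>h. mdiscard \<otimes> h) hs) = mdiscard \<otimes> Tuple m hs"
proof (induction hs)
  case Nil then show ?case by (simp add: mdiscard_n_Suc)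
next
  case (Cons h hs)
  then show ?case by (simp add: mcopy_n_Suc_mdiscard_Tensor)
qed

definition Proj :: "nat \<Rightarrow> nat \<Rightarrow> mor" where
  "Proj n i = mdiscard_n i \<otimes> Ident 1 \<otimes> mdiscard_n (n - Suc i)"

lemma mdom_Proj [simp]: "i < n \<Longrightarrow> mdom (Proj n i) = n" by (simp add: Proj_def)
lemma mcod_Proj [simp]: "mcod (Proj n i) = 1" by (simp add: Proj_def)

lemma Proj_Suc: "i < m \<Longrightarrow> Proj (Suc m) (Suc i) = mdiscard \<otimes> Proj m i"
  by (simp add: Proj_def mdiscard_n_Suc Tensor_assoc)

lemma Proj_0: "Proj (Suc m) 0 = Ident 1 \<otimes> mdiscard_n m"
  by (simp add: Proj_def mdiscard_n_0 Ident_0_Tensor)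

lemma Proj_Tensor_mdiscard_n: "i < n \<Longrightarrow> Proj n i \<otimes> mdiscard_n j = Proj (n + j) i"
proof -
  assume "i < n"
  then have "n + j - Suc i = (n - Suc i) + j" by simp
  then show ?thesis by (simp add: Proj_def mdiscard_n_add Tensor_assoc)
qed

lemma mdiscard_n_Tensor_Proj: "mdiscard_n j \<otimes> Proj n i = Proj (j + n) (j + i)"
  by (simp add: Proj_def mdiscard_n_add Tensor_assoc)

lemma Ident_eq_Tuple_Proj: "Ident m = Tuple m (map (Proj m) [0..<m])"
proof (induction m)
  case 0 then show ?case by (simp add: mdiscard_n_0)
next
  case (Suc m)
  have "map (Proj (Suc m)) [0..<Suc m] = (Ident 1 \<otimes> mdiscard_n m) # map (\<lambda>h. mdiscard \<otimes> h) (map (Proj m) [0..<m])"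
    by (simp add: upt_conv_Cons map_Suc_upt[symmetric] Proj_Suc Proj_0 del: upt_Suc)
  then have "Tuple (Suc m) (map (Proj (Suc m)) [0..<Suc m]) =
      mcopy_n (Suc m) \<Zsemi> ((Ident 1 \<otimes> mdiscard_n m) \<otimes> (mdiscard \<otimes> Ident m))"
    using Suc Tuple_mdiscard_Tensor[of "map (Proj m) [0..<m]" m] by simp
  also have "\<dots> = Ident (Suc m)"
    by (subst mcopy_n_Suc_Tensor)
      (simp_all add: mcopy_counit_right mcopy_n_mdiscard_n_Ident Swap_0_left Ident_Tensor_Ident Comp_Ident Ident_0_Tensor)
  finally show ?case ..
qed

lemma Comp_Tuple: "\<forall>h\<in>set hs. mdom h = m \<Longrightarrow> mdom p = n \<Longrightarrow> mcod p = m \<Longrightarrow>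
   p \<Zsemi> Tuple m hs = Tuple n (map (\<lambda>h. p \<Zsemi> h) hs)"
proof (induction hs)
  case Nil then show ?case using mdiscard_natural[of p] by simp
next
  case (Cons h hs)
  have "p \<Zsemi> Tuple m (h # hs) = (p \<Zsemi> mcopy_n m) \<Zsemi> (h \<otimes> Tuple m hs)"
    using Cons.prems by (simp add: Comp_assoc)
  also have "\<dots> = (mcopy_n n \<Zsemi> (p \<otimes> p)) \<Zsemi> (h \<otimes> Tuple m hs)"
    using mcopy_natural[of p] Cons.prems by simp
  also have "\<dots> = mcopy_n n \<Zsemi> ((p \<Zsemi> h) \<otimes> (p \<Zsemi> Tuple m hs))"
    using Cons.prems by (simp add: Comp_assoc Tensor_Comp_Tensor)
  finally show ?case using Cons by simp
qed

lemma mor_eq_Tuple_components: "mdom p = n \<Longrightarrow> mcod p = m \<Longrightarrow> p = Tuple n (map (\<lambda>k. p \<Zsemi> Proj m k) [0..<m])"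
proof -
  assume a: "mdom p = n" "mcod p = m"
  have "p = p \<Zsemi> Ident m" using a by (simp add: Comp_Ident)
  also have "\<dots> = p \<Zsemi> Tuple m (map (Proj m) [0..<m])" using Ident_eq_Tuple_Proj by simp
  also have "\<dots> = Tuple n (map (\<lambda>h. p \<Zsemi> h) (map (Proj m) [0..<m]))"
    by (rule Comp_Tuple) (use a in auto)
  finally show ?thesis by (simp add: comp_def)
qed

section \<open>Boolean terms and their denotations\<close>

definition bfun :: "nat \<Rightarrow> mor \<Rightarrow> bool" where
  "bfun n A \<longleftrightarrow> mdom A = n \<and> mcod A = 1"

definition binop :: "nat \<Rightarrow> mor \<Rightarrow> mor \<Rightarrow> mor \<Rightarrow> mor" where
  "binop n OP A B = mcopy_n n \<Zsemi> (A \<otimes> B) \<Zsemi> OP"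

abbreviation bplus :: "nat \<Rightarrow> mor \<Rightarrow> mor \<Rightarrow> mor" where "bplus n \<equiv> binop n madd"
abbreviation btimes :: "nat \<Rightarrow> mor \<Rightarrow> mor \<Rightarrow> mor" where "btimes n \<equiv> binop n mand"

definition bzero :: "nat \<Rightarrow> mor" where "bzero n = mdiscard_n n \<Zsemi> mzero"
definition bone :: "nat \<Rightarrow> mor" where "bone n = mdiscard_n n \<Zsemi> mone"

lemma bfun_binop: "bfun n A \<Longrightarrow> bfun n B \<Longrightarrow> mdom OP = 2 \<Longrightarrow> mcod OP = 1 \<Longrightarrow> bfun n (binop n OP A B)"
  by (simp add: binop_def bfun_def)

lemma bfun_bplus [simp]: "bfun n A \<Longrightarrow> bfun n B \<Longrightarrow> bfun n (bplus n A B)"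
  by (rule bfun_binop) simp_all

lemma bfun_btimes [simp]: "bfun n A \<Longrightarrow> bfun n B \<Longrightarrow> bfun n (btimes n A B)"
  by (rule bfun_binop) simp_all

lemma bfun_bzero [simp]: "bfun n (bzero n)" by (simp add: bzero_def bfun_def)
lemma bfun_bone [simp]: "bfun n (bone n)" by (simp add: bone_def bfun_def)

lemma Comp_binop:
  assumes "mcod F = n" "bfun n A" "bfun n B" "mdom OP = 2"
  shows "F \<Zsemi> binop n OP A B = binop (mdom F) OP (F \<Zsemi> A) (F \<Zsemi> B)"
proof -
  have "F \<Zsemi> binop n OP A B = (F \<Zsemi> mcopy_n n) \<Zsemi> (A \<otimes> B) \<Zsemi> OP"
    using assms by (simp add: binop_def bfun_def Comp_assoc)
  also have "\<dots> = mcopy_n (mdom F) \<Zsemi> ((F \<otimes> F) \<Zsemi> (A \<otimes> B)) \<Zsemi> OP"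
    using assms mcopy_natural[of F] by (simp add: bfun_def Comp_assoc)
  finally show ?thesis
    using assms by (simp add: binop_def bfun_def Tensor_Comp_Tensor)
qed

lemma Comp_bzero: "F \<Zsemi> bzero (mcod F) = bzero (mdom F)"
  unfolding bzero_def by (simp add: Comp_assoc[symmetric] mdiscard_natural)

lemma Comp_bone: "F \<Zsemi> bone (mcod F) = bone (mdom F)"
  unfolding bone_def by (simp add: Comp_assoc[symmetric] mdiscard_natural)

datatype bterm = BVar nat | BZero | BOne | BAdd bterm bterm | BMul bterm bterm

fun vars_below :: "nat \<Rightarrow> bterm \<Rightarrow> bool" where
  "vars_below n (BVar i) = (i < n)"
| "vars_below n BZero = True"
| "vars_below n BOne = True"
| "vars_below n (BAdd s t) = (vars_below n s \<and> vars_below n t)"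
| "vars_below n (BMul s t) = (vars_below n s \<and> vars_below n t)"

fun den :: "nat \<Rightarrow> bterm \<Rightarrow> mor" where
  "den n (BVar i) = Proj n i"
| "den n BZero = bzero n"
| "den n BOne = bone n"
| "den n (BAdd s t) = bplus n (den n s) (den n t)"
| "den n (BMul s t) = btimes n (den n s) (den n t)"

lemma bfun_Proj [simp]: "i < n \<Longrightarrow> bfun n (Proj n i)"
  by (simp add: bfun_def)

lemma bfun_den [simp]: "vars_below n t \<Longrightarrow> bfun n (den n t)"
  by (induction t) simp_all

lemma mdom_den [simp]: "vars_below n t \<Longrightarrow> mdom (den n t) = n"
  and mcod_den [simp]: "vars_below n t \<Longrightarrow> mcod (den n t) = 1"
  using bfun_den unfolding bfun_def by blast+

fun bsubst :: "(nat \<Rightarrow> bterm) \<Rightarrow> bterm \<Rightarrow> bterm" where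
  "bsubst \<sigma> (BVar i) = \<sigma> i"
| "bsubst \<sigma> BZero = BZero"
| "bsubst \<sigma> BOne = BOne"
| "bsubst \<sigma> (BAdd s t) = BAdd (bsubst \<sigma> s) (bsubst \<sigma> t)"
| "bsubst \<sigma> (BMul s t) = BMul (bsubst \<sigma> s) (bsubst \<sigma> t)"

lemma vars_below_bsubst: "vars_below k t \<Longrightarrow> (\<forall>j<k. vars_below n (\<sigma> j)) \<Longrightarrow> vars_below n (bsubst \<sigma> t)"
  by (induction t) auto

lemma bsubst_BVar: "bsubst BVar t = t"
  by (induction t) simp_all

lemma Comp_den:
  assumes "mdom F = n" "mcod F = k" "\<forall>j<k. F \<Zsemi> Proj k j = den n (\<sigma> j)" "\<forall>j<k. vars_below n (\<sigma> j)"
  shows "vars_below k t \<Longrightarrow> F \<Zsemi> den k t = den n (bsubst \<sigma> t)"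
proof (induction t)
  case (BVar i) then show ?case using assms by simp
qed (use assms Comp_bzero[of F] Comp_bone[of F] in \<open>simp_all add: Comp_binop vars_below_bsubst\<close>)

definition bshift :: "nat \<Rightarrow> bterm \<Rightarrow> bterm" where
  "bshift j t = bsubst (\<lambda>i. BVar (j + i)) t"

lemma den_Tensor_mdiscard_n:
  assumes "vars_below n t"
  shows "den n t \<otimes> mdiscard_n j = den (n + j) t"
proof -
  have "den n t \<otimes> mdiscard_n j = (Ident n \<otimes> mdiscard_n j) \<Zsemi> den n t"
    using assms by (intro Tensor_mdiscard_n) simp
  also have "\<dots> = den (n + j) (bsubst BVar t)"
    by (rule Comp_den[OF _ _ _ _ assms])
      (simp_all, metis Proj_Tensor_mdiscard_n Tensor_mdiscard_n mdom_Proj)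
  finally show ?thesis by (simp add: bsubst_BVar)
qed

lemma mdiscard_n_Tensor_den:
  assumes "vars_below n t"
  shows "mdiscard_n j \<otimes> den n t = den (j + n) (bshift j t)"
proof -
  have "mdiscard_n j \<otimes> den n t = (mdiscard_n j \<otimes> Ident n) \<Zsemi> den n t"
    using assms by (intro mdiscard_n_Tensor) simp
  also have "\<dots> = den (j + n) (bshift j t)"
    unfolding bshift_def
    by (rule Comp_den[OF _ _ _ _ assms])
      (simp_all, metis mdiscard_n_Tensor_Proj mdiscard_n_Tensor mdom_Proj)
  finally show ?thesis .
qed

fun out_term :: "circ \<Rightarrow> nat \<Rightarrow> bterm" where
  "out_term (CGen Discard) k = BZero"
| "out_term (CGen Copy) k = BVar 0"
| "out_term (CGen Zero) k = BZero"
| "out_term (CGen One) k = BOne"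
| "out_term (CGen Add) k = BAdd (BVar 0) (BVar 1)"
| "out_term (CGen And) k = BMul (BVar 0) (BVar 1)"
| "out_term (CId n) k = BVar k"
| "out_term (CSym m n) k = (if k < n then BVar (m + k) else BVar (k - n))"
| "out_term (CSeq f g) k = bsubst (out_term f) (out_term g k)"
| "out_term (CPar f g) k = (if k < ccod f then out_term f k else bshift (cdom f) (out_term g (k - ccod f)))"

lemma vars_below_bshift: "vars_below n t \<Longrightarrow> vars_below (j + n) (bshift j t)"
  unfolding bshift_def by (induction t) auto

lemma vars_below_mono: "vars_below n t \<Longrightarrow> n \<le> m \<Longrightarrow> vars_below m t"
  by (induction t) auto

lemma vars_below_out_term: "wf c \<Longrightarrow> k < ccod c \<Longrightarrow> vars_below (cdom c) (out_term c k)"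
proof (induction c arbitrary: k)
  case (CGen g) then show ?case by (cases g) auto
next
  case (CSeq f g) then show ?case by (auto intro!: vars_below_bsubst)
next
  case (CPar f g)
  show ?case
  proof (cases "k < ccod f")
    case True then show ?thesis using CPar vars_below_mono by force
  next
    case False
    then have "vars_below (cdom g) (out_term g (k - ccod f))" using CPar by simp
    then have "vars_below (cdom f + cdom g) (bshift (cdom f) (out_term g (k - ccod f)))"
      by (rule vars_below_bshift)
    then show ?thesis using False by simp
  qed
qed auto

lemma mcopy_n_2_Proj: "mcopy_n 2 \<Zsemi> (Proj 2 0 \<otimes> Proj 2 1) = Ident 2"
proof -
  have u: "[0..<2] = [0::nat, 1]" by (simp add: upt_rec One_nat_def)
  have "Ident 2 = Tuple 2 [Proj 2 0, Proj 2 1]" using Ident_eq_Tuple_Proj[of 2] unfolding u by simp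
  also have "\<dots> = mcopy_n 2 \<Zsemi> (Proj 2 0 \<otimes> Proj 2 1)" by (simp add: mcopy_n_Tensor_mdiscard_n)
  finally show ?thesis by simp
qed

lemma Proj_1_0: "Proj 1 0 = Ident 1"
  by (simp add: Proj_def mdiscard_n_0 Ident_0_Tensor Tensor_Ident_0)

lemma Gen_Comp_Proj:
  "k < gcod g \<Longrightarrow> Gen g \<Zsemi> Proj (gcod g) k = den (gdom g) (out_term (CGen g) k)"
proof (cases g)
  case Copy
  have "Proj 2 0 = Ident 1 \<otimes> mdiscard" "Proj 2 1 = mdiscard \<otimes> Ident 1"
    by (simp_all add: Proj_def mdiscard_n_0 mdiscard_n_1 Ident_0_Tensor Tensor_Ident_0)
  moreover assume "k < gcod g"
  then have "k = 0 \<or> k = 1" using Copy by auto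
  ultimately show ?thesis
    using Copy by (auto simp: mcopy_counit mcopy_counit_right Proj_1_0)
qed (simp_all add: Proj_1_0 Comp_Ident Ident_Comp bzero_def bone_def binop_def mdiscard_n_0
       Comp_assoc[symmetric] mcopy_n_2_Proj)

lemma Swap_Comp_Proj:
  assumes "k < n + m"
  shows "Swap m n \<Zsemi> Proj (n + m) k = den (m + n) (out_term (CSym m n) k)"
proof (cases "k < n")
  case True
  have "Swap m n \<Zsemi> Proj (n + m) k = Swap m n \<Zsemi> (Proj n k \<otimes> mdiscard_n m)"
    using True by (simp add: Proj_Tensor_mdiscard_n)
  also have "\<dots> = (mdiscard_n m \<otimes> Proj n k) \<Zsemi> Swap 0 1"
    using Swap_natural[of "mdiscard_n m" "Proj n k"] True by simp
  also have "\<dots> = Proj (m + n) (m + k)"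
    using True by (simp add: Swap_0_left Comp_Ident mdiscard_n_Tensor_Proj)
  finally show ?thesis using True by simp
next
  case False
  then obtain i where i: "k = n + i" "i < m"
    using assms by (metis add_diff_inverse_nat nat_add_left_cancel_less)
  have "Swap m n \<Zsemi> Proj (n + m) k = Swap m n \<Zsemi> (mdiscard_n n \<otimes> Proj m i)"
    using i by (simp add: mdiscard_n_Tensor_Proj)
  also have "\<dots> = (Proj m i \<otimes> mdiscard_n n) \<Zsemi> Swap 1 0"
    using Swap_natural[of "Proj m i" "mdiscard_n n"] i by simp
  also have "\<dots> = Proj (m + n) i"
    using i by (simp add: Swap_0_right Comp_Ident Proj_Tensor_mdiscard_n)
  finally show ?thesis using i by simp
qed

lemma Tensor_Comp_Proj_left:
  assumes "k < mcod A"
  shows "(A \<otimes> B) \<Zsemi> Proj (mcod A + mcod B) k = (A \<Zsemi> Proj (mcod A) k) \<otimes> mdiscard_n (mdom B)"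
  using assms mdiscard_natural[of B]
  by (simp add: Proj_Tensor_mdiscard_n[symmetric] Tensor_Comp_Tensor)

lemma Tensor_Comp_Proj_right:
  assumes "i < mcod B"
  shows "(A \<otimes> B) \<Zsemi> Proj (mcod A + mcod B) (mcod A + i) = mdiscard_n (mdom A) \<otimes> (B \<Zsemi> Proj (mcod B) i)"
  using assms mdiscard_natural[of A]
  by (simp add: mdiscard_n_Tensor_Proj[symmetric] Tensor_Comp_Tensor)

lemma mor_of_Comp_Proj:
  "wf c \<Longrightarrow> k < ccod c \<Longrightarrow> mor_of c \<Zsemi> Proj (ccod c) k = den (cdom c) (out_term c k)"
proof (induction c arbitrary: k)
  case (CGen g) then show ?case by (simp add: mor_of_CGen Gen_Comp_Proj)
next
  case (CId n) then show ?case by (simp add: mor_of_CId Ident_Comp)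
next
  case (CSym m n) then show ?case by (simp add: mor_of_CSym Swap_Comp_Proj)
next
  case (CSeq f g)
  have wf: "wf f" "wf g" "ccod f = cdom g" using CSeq.prems by auto
  have "mor_of (CSeq f g) \<Zsemi> Proj (ccod (CSeq f g)) k = mor_of f \<Zsemi> den (cdom g) (out_term g k)"
    using CSeq wf by (simp add: mor_of_CSeq Comp_assoc mdom_mor_of mcod_mor_of)
  also have "\<dots> = den (cdom f) (bsubst (out_term f) (out_term g k))"
    by (rule Comp_den)
      (use CSeq wf vars_below_out_term in \<open>simp_all add: mdom_mor_of mcod_mor_of\<close>)
  finally show ?case by simp
next
  case (CPar f g)
  have wf: "wf f" "wf g" using CPar.prems by auto
  show ?case
  proof (cases "k < ccod f")
    case True
    then have "mor_of (CPar f g) \<Zsemi> Proj (ccod (CPar f g)) k =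
        den (cdom f) (out_term f k) \<otimes> mdiscard_n (cdom g)"
      using wf CPar.IH(1) Tensor_Comp_Proj_left[of k "mor_of f" "mor_of g"]
      by (simp add: mor_of_CPar mdom_mor_of mcod_mor_of)
    then show ?thesis using True wf den_Tensor_mdiscard_n vars_below_out_term by simp
  next
    case False
    then obtain i where i: "k = ccod f + i" "i < ccod g"
      using CPar.prems by (metis add_diff_inverse_nat ccod.simps(5) nat_add_left_cancel_less)
    then have "mor_of (CPar f g) \<Zsemi> Proj (ccod (CPar f g)) k =
        mdiscard_n (cdom f) \<otimes> den (cdom g) (out_term g i)"
      using wf CPar.IH(2) Tensor_Comp_Proj_right[of i "mor_of g" "mor_of f"]
      by (simp add: mor_of_CPar mdom_mor_of mcod_mor_of)
    then show ?thesis using i wf mdiscard_n_Tensor_den vars_below_out_term by simp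
  qed
qed

fun beval :: "bool list \<Rightarrow> bterm \<Rightarrow> bool" where
  "beval xs (BVar i) = xs ! i"
| "beval xs BZero = False"
| "beval xs BOne = True"
| "beval xs (BAdd s t) = (beval xs s \<noteq> beval xs t)"
| "beval xs (BMul s t) = (beval xs s \<and> beval xs t)"

lemma beval_bsubst: "vars_below k t \<Longrightarrow> beval xs (bsubst \<sigma> t) = beval (map (\<lambda>j. beval xs (\<sigma> j)) [0..<k]) t"
  by (induction t) auto

lemma beval_take: "vars_below n t \<Longrightarrow> n \<le> length xs \<Longrightarrow> beval (take n xs) t = beval xs t"
  by (induction t) auto

lemma beval_bshift: "vars_below n t \<Longrightarrow> j + n \<le> length xs \<Longrightarrow> beval xs (bshift j t) = beval (drop j xs) t"
  unfolding bshift_def by (induction t) auto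

lemma mor_of_eq_Tuple_den:
  "wf p \<Longrightarrow> mor_of p = Tuple (cdom p) (map (\<lambda>k. den (cdom p) (out_term p k)) [0..<ccod p])"
proof -
  assume w: "wf p"
  have "mor_of p = Tuple (cdom p) (map (\<lambda>k. mor_of p \<Zsemi> Proj (ccod p) k) [0..<ccod p])"
    using mor_eq_Tuple_components[of "mor_of p" "cdom p" "ccod p"] w by (simp add: mdom_mor_of mcod_mor_of)
  also have "\<dots> = Tuple (cdom p) (map (\<lambda>k. den (cdom p) (out_term p k)) [0..<ccod p])"
    by (intro arg_cong[where f="Tuple _"] map_cong) (simp_all add: mor_of_Comp_Proj w)
  finally show ?thesis .
qed

lemma beval_out_term: "wf c \<Longrightarrow> length xs = cdom c \<Longrightarrow> k < ccod c \<Longrightarrow> beval xs (out_term c k) = sem c xs ! k"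
proof (induction c arbitrary: xs k)
  case (CGen g) then show ?case by (cases g) (auto simp: length_Suc_conv numeral_2_eq_2 One_nat_def less_Suc_eq)
next
  case (CSym m n) then show ?case by (auto simp: nth_append min_def)
next
  case (CSeq f g)
  have wf: "wf f" "wf g" "ccod f = cdom g" using CSeq.prems(1) by auto
  have b: "vars_below (cdom g) (out_term g k)"
    using vars_below_out_term[of g k] wf CSeq.prems by simp
  have m: "map (\<lambda>j. beval xs (out_term f j)) [0..<cdom g] = sem f xs"
    by (rule nth_equalityI) (use CSeq wf length_sem in auto)
  show ?case using beval_bsubst[OF b, of xs "out_term f"] m CSeq.IH(2)[of "sem f xs" k] wf CSeq.prems length_sem
    by simp
next
  case (CPar f g)
  have wf: "wf f" "wf g" using CPar.prems(1) by auto
  show ?case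
  proof (cases "k < ccod f")
    case True
    have "beval xs (out_term f k) = beval (take (cdom f) xs) (out_term f k)"
      using beval_take[of "cdom f" "out_term f k" xs] vars_below_out_term[of f k] wf True CPar.prems by simp
    also have "\<dots> = sem f (take (cdom f) xs) ! k" using CPar.IH(1) True CPar.prems by simp
    finally show ?thesis using True length_sem wf CPar.prems by (simp add: nth_append)
  next
    case False
    have "beval xs (bshift (cdom f) (out_term g (k - ccod f))) = beval (drop (cdom f) xs) (out_term g (k - ccod f))"
      using beval_bshift[of "cdom g" "out_term g (k - ccod f)" "cdom f" xs]
        vars_below_out_term[of g "k - ccod f"] wf False CPar.prems by simp
    also have "\<dots> = sem g (drop (cdom f) xs) ! (k - ccod f)"
      using CPar.IH(2) False CPar.prems by simp
    finally show ?thesis using False length_sem wf CPar.prems by (simp add: nth_append)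
  qed
qed auto

lemma mor_of_eqI_den:
  assumes "wf p" "wf q" "cdom p = n" "cdom q = n" "ccod p = m" "ccod q = m"
    "\<forall>k<m. den n (out_term p k) = den n (out_term q k)"
  shows "mor_of p = mor_of q"
proof -
  have "Tuple n (map (\<lambda>k. den n (out_term p k)) [0..<m]) = Tuple n (map (\<lambda>k. den n (out_term q k)) [0..<m])"
    by (intro arg_cong[where f="Tuple _"] map_cong) (simp_all add: assms(7))
  then show ?thesis using mor_of_eq_Tuple_den[OF assms(1)] mor_of_eq_Tuple_den[OF assms(2)] assms by simp
qed

fun wiring :: "circ \<Rightarrow> bool" where
  "wiring (CGen g) = (g = Copy \<or> g = Discard)"
| "wiring (CId n) = True"
| "wiring (CSym m n) = True"
| "wiring (CSeq f g) = (wiring f \<and> wiring g)"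
| "wiring (CPar f g) = (wiring f \<and> wiring g)"

lemma out_term_wiring: "wf c \<Longrightarrow> wiring c \<Longrightarrow> k < ccod c \<Longrightarrow> \<exists>j<cdom c. out_term c k = BVar j"
proof (induction c arbitrary: k)
  case (CGen g) then show ?case by auto
next
  case (CSym m n) then show ?case by auto
next
  case (CSeq f g)
  have w: "wf f" "wf g" "ccod f = cdom g" "wiring f" "wiring g" using CSeq.prems by auto
  obtain j where j: "j < cdom g" "out_term g k = BVar j" using CSeq.IH(2)[of k] w CSeq.prems by auto
  obtain i where i: "i < cdom f" "out_term f j = BVar i" using CSeq.IH(1)[of j] w j by auto
  show ?case using i j by simp
next
  case (CPar f g)
  show ?case
  proof (cases "k < ccod f")
    case True
    obtain j where j: "j < cdom f" "out_term f k = BVar j"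
      using CPar.IH(1)[of k] CPar.prems True by auto
    then show ?thesis using True by simp
  next
    case False
    have "k - ccod f < ccod g" using False CPar.prems by simp
    then obtain j where j: "j < cdom g" "out_term g (k - ccod f) = BVar j"
      using CPar.IH(2)[of "k - ccod f"] CPar.prems by auto
    then show ?thesis using False by (auto simp: bshift_def)
  qed
qed auto

lemma wiring_coherence:
  assumes "wf p" "wf q" "wiring p" "wiring q" "cdom p = cdom q" "ccod p = ccod q"
    "\<forall>xs. length xs = cdom p \<longrightarrow> sem p xs = sem q xs"
  shows "mor_of p = mor_of q"
proof (rule mor_of_eqI_den[OF assms(1,2) HOL.refl assms(5)[symmetric] HOL.refl assms(6)[symmetric]])
  show "\<forall>k<ccod p. den (cdom p) (out_term p k) = den (cdom p) (out_term q k)"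
  proof (intro allI impI)
    fix k assume k: "k < ccod p"
    obtain j1 where j1: "j1 < cdom p" "out_term p k = BVar j1"
      using out_term_wiring[OF assms(1) assms(3) k] by blast
    have k2: "k < ccod q" using k assms(6) by simp
    obtain j2 where j2: "j2 < cdom p" "out_term q k = BVar j2"
      using out_term_wiring[OF assms(2) assms(4) k2] assms(5) by auto
    let ?xs = "(replicate (cdom p) False)[j1 := True]"
    have "beval ?xs (out_term p k) = beval ?xs (out_term q k)"
      using beval_out_term[of p ?xs k] beval_out_term[of q ?xs k] assms k by simp
    then have "j1 = j2" using j1 j2 by (cases "j1 = j2") auto
    then show "den (cdom p) (out_term p k) = den (cdom p) (out_term q k)" using j1 j2 by simp
  qed
qed

(* The coherence laws of mcopy_n hold semantically, so wiring_coherence proves them. *)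
lemma wiring_copyn: "wiring (copyn n)" by (induction n) auto

lemma mor_of_copyn: "mor_of (copyn n) = mcopy_n n" by (simp add: mcopy_n_def)

lemma mcopy_n_commute: "mcopy_n n \<Zsemi> Swap n n = mcopy_n n"
proof -
  have "mor_of (CSeq (copyn n) (CSym n n)) = mor_of (copyn n)"
    by (rule wiring_coherence) (use wiring_copyn[of n] in \<open>auto simp: sem_copyn\<close>)
  then show ?thesis by (simp add: mor_of_CSeq mor_of_CSym mor_of_copyn)
qed

lemma mcopy_n_assoc: "mcopy_n n \<Zsemi> (mcopy_n n \<otimes> Ident n) = mcopy_n n \<Zsemi> (Ident n \<otimes> mcopy_n n)"
proof -
  have "mor_of (CSeq (copyn n) (CPar (copyn n) (CId n))) = mor_of (CSeq (copyn n) (CPar (CId n) (copyn n)))"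
    by (rule wiring_coherence) (use wiring_copyn[of n] in \<open>auto simp: sem_copyn\<close>)
  then show ?thesis by (simp add: mor_of_CSeq mor_of_CPar mor_of_CId mor_of_copyn)
qed

lemma mcopy_n_interleave:
  "mcopy_n n \<Zsemi> (Ident n \<otimes> mcopy_n n) \<Zsemi> (mcopy_n n \<otimes> Ident n \<otimes> Ident n) \<Zsemi> (Ident n \<otimes> Swap n n \<otimes> Ident n)
  = mcopy_n n \<Zsemi> (mcopy_n n \<otimes> mcopy_n n)"
proof -
  have "mor_of (CSeq (copyn n) (CSeq (CPar (CId n) (copyn n)) (CSeq (CPar (copyn n) (CPar (CId n) (CId n)))
          (CPar (CId n) (CPar (CSym n n) (CId n))))))
      = mor_of (CSeq (copyn n) (CPar (copyn n) (copyn n)))"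
    by (rule wiring_coherence) (use wiring_copyn[of n] in \<open>auto simp: sem_copyn\<close>)
  then show ?thesis by (simp add: mor_of_CSeq mor_of_CPar mor_of_CId mor_of_CSym mor_of_copyn)
qed

lemma mcopy_n_1: "mcopy_n 1 = mcopy"
  by (simp add: One_nat_def mcopy_n_Suc mcopy_n_0 Swap_0_right Ident_Tensor_Ident Tensor_Ident_0 Comp_Ident)

section \<open>The Boolean ring of morphisms n \<rightarrow> 1\<close>

lemma binop_commute:
  assumes "bfun n A" "bfun n B" "mdom OP = 2" "mcod OP = 1" "Swap 1 1 \<Zsemi> OP = OP"
  shows "binop n OP A B = binop n OP B A"
proof -
  have "binop n OP A B = mcopy_n n \<Zsemi> (A \<otimes> B) \<Zsemi> (Swap 1 1 \<Zsemi> OP)"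
    using assms by (simp add: bfun_def binop_def)
  also have "\<dots> = mcopy_n n \<Zsemi> ((A \<otimes> B) \<Zsemi> Swap 1 1) \<Zsemi> OP"
    using assms by (simp add: bfun_def Comp_assoc)
  also have "(A \<otimes> B) \<Zsemi> Swap 1 1 = Swap n n \<Zsemi> (B \<otimes> A)"
    using Swap_natural[of A B] assms by (simp add: bfun_def)
  also have "mcopy_n n \<Zsemi> (Swap n n \<Zsemi> (B \<otimes> A)) \<Zsemi> OP = (mcopy_n n \<Zsemi> Swap n n) \<Zsemi> (B \<otimes> A) \<Zsemi> OP"
    using assms by (simp add: bfun_def Comp_assoc)
  finally show ?thesis by (simp add: mcopy_n_commute binop_def)
qed

lemma binop_Tensor:
  assumes "bfun n A" "bfun n B" "bfun n C" "mdom OP = 2" "mcod OP = 1"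
  shows "binop n OP A B \<otimes> C = (mcopy_n n \<otimes> Ident n) \<Zsemi> ((A \<otimes> B) \<otimes> C) \<Zsemi> (OP \<otimes> Ident 1)"
proof -
  have "(mcopy_n n \<otimes> Ident n) \<Zsemi> ((A \<otimes> B) \<otimes> C) \<Zsemi> (OP \<otimes> Ident 1) =
      (mcopy_n n \<otimes> Ident n) \<Zsemi> (((A \<otimes> B) \<Zsemi> OP) \<otimes> (C \<Zsemi> Ident 1))"
    using assms by (simp add: bfun_def Tensor_Comp_Tensor)
  also have "\<dots> = (mcopy_n n \<Zsemi> (A \<otimes> B) \<Zsemi> OP) \<otimes> (Ident n \<Zsemi> C \<Zsemi> Ident 1)"
    using assms by (simp add: bfun_def Tensor_Comp_Tensor)
  finally show ?thesis using assms by (simp add: bfun_def binop_def Ident_Comp Comp_Ident)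
qed

lemma Tensor_binop:
  assumes "bfun n A" "bfun n B" "bfun n C" "mdom OP = 2" "mcod OP = 1"
  shows "A \<otimes> binop n OP B C = (Ident n \<otimes> mcopy_n n) \<Zsemi> (A \<otimes> (B \<otimes> C)) \<Zsemi> (Ident 1 \<otimes> OP)"
proof -
  have "(Ident n \<otimes> mcopy_n n) \<Zsemi> (A \<otimes> (B \<otimes> C)) \<Zsemi> (Ident 1 \<otimes> OP) =
      (Ident n \<otimes> mcopy_n n) \<Zsemi> ((A \<Zsemi> Ident 1) \<otimes> ((B \<otimes> C) \<Zsemi> OP))"
    using assms by (simp add: bfun_def Tensor_Comp_Tensor)
  also have "\<dots> = (Ident n \<Zsemi> A \<Zsemi> Ident 1) \<otimes> (mcopy_n n \<Zsemi> (B \<otimes> C) \<Zsemi> OP)"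
    using assms by (simp add: bfun_def Tensor_Comp_Tensor)
  finally show ?thesis using assms by (simp add: bfun_def binop_def Ident_Comp Comp_Ident)
qed

lemma binop_assoc:
  assumes "bfun n A" "bfun n B" "bfun n C" "mdom OP = 2" "mcod OP = 1"
    and OP_assoc: "(OP \<otimes> Ident 1) \<Zsemi> OP = (Ident 1 \<otimes> OP) \<Zsemi> OP"
  shows "binop n OP (binop n OP A B) C = binop n OP A (binop n OP B C)"
proof -
  have "binop n OP (binop n OP A B) C =
      (mcopy_n n \<Zsemi> (mcopy_n n \<otimes> Ident n)) \<Zsemi> (A \<otimes> B \<otimes> C) \<Zsemi> (OP \<otimes> Ident 1) \<Zsemi> OP"
    using assms by (simp add: binop_def[of n OP "binop n OP A B"] binop_Tensor bfun_def Comp_assoc Tensor_assoc)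
  also have "\<dots> = (mcopy_n n \<Zsemi> (Ident n \<otimes> mcopy_n n)) \<Zsemi> (A \<otimes> B \<otimes> C) \<Zsemi> (Ident 1 \<otimes> OP) \<Zsemi> OP"
    using assms by (simp add: mcopy_n_assoc bfun_def Comp_assoc[symmetric])
  also have "\<dots> = binop n OP A (binop n OP B C)"
    using assms by (simp add: binop_def[of n OP A] Tensor_binop bfun_def Comp_assoc Tensor_assoc)
  finally show ?thesis .
qed

lemma binop_unit:
  assumes "bfun n A" "mdom OP = 2" "mcod OP = 1" "mdom U0 = 0" "mcod U0 = 1" "(U0 \<otimes> Ident 1) \<Zsemi> OP = Ident 1"
  shows "binop n OP (mdiscard_n n \<Zsemi> U0) A = A"
proof -
  have "(mdiscard_n n \<Zsemi> U0) \<otimes> A = (mdiscard_n n \<otimes> Ident n) \<Zsemi> (U0 \<otimes> A)"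
    using assms by (simp add: bfun_def Tensor_Comp_Tensor Ident_Comp)
  also have "U0 \<otimes> A = A \<Zsemi> (U0 \<otimes> Ident 1)"
  proof -
    have "(Ident 0 \<otimes> A) \<Zsemi> (U0 \<otimes> Ident 1) = U0 \<otimes> A"
      using assms by (simp add: bfun_def Tensor_Comp_Tensor Ident_Comp Comp_Ident)
    then show ?thesis by (simp add: Ident_0_Tensor)
  qed
  finally have e: "(mdiscard_n n \<Zsemi> U0) \<otimes> A = (mdiscard_n n \<otimes> Ident n) \<Zsemi> A \<Zsemi> (U0 \<otimes> Ident 1)" .
  have "binop n OP (mdiscard_n n \<Zsemi> U0) A = (mcopy_n n \<Zsemi> (mdiscard_n n \<otimes> Ident n)) \<Zsemi> A \<Zsemi> ((U0 \<otimes> Ident 1) \<Zsemi> OP)"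
    unfolding binop_def e using assms by (simp add: bfun_def Comp_assoc)
  also have "\<dots> = A"
    using assms by (simp add: bfun_def mcopy_n_mdiscard_n_Ident Ident_Comp Comp_Ident)
  finally show ?thesis .
qed

lemma binop_diag: "bfun n A \<Longrightarrow> mdom OP = 2 \<Longrightarrow> binop n OP A A = A \<Zsemi> mcopy \<Zsemi> OP"
  using mcopy_natural[of A] by (simp add: bfun_def binop_def mcopy_n_1 Comp_assoc[symmetric])

lemma btimes_self: "bfun n A \<Longrightarrow> btimes n A A = A"
  by (simp add: binop_diag bfun_def mcopy_mand Comp_Ident)

lemma bplus_self: "bfun n A \<Longrightarrow> bplus n A A = bzero n"
  using mdiscard_natural[of A]
  by (simp add: binop_diag bfun_def mcopy_madd bzero_def mdiscard_n_1 Comp_assoc[symmetric])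

lemma Tensor_Comp_mcopy_Tensor:
  assumes "bfun n A" "mdom B = n" "mdom C = n"
  shows "(A \<otimes> B \<otimes> C) \<Zsemi> (mcopy \<otimes> Ident (mcod B) \<otimes> Ident (mcod C)) =
    (mcopy_n n \<otimes> Ident n \<otimes> Ident n) \<Zsemi> (A \<otimes> A \<otimes> B \<otimes> C)"
proof -
  have "(A \<otimes> B \<otimes> C) \<Zsemi> (mcopy \<otimes> Ident (mcod B) \<otimes> Ident (mcod C)) = (A \<Zsemi> mcopy) \<otimes> B \<otimes> C"
    using assms by (simp add: bfun_def Tensor_Comp_Tensor Comp_Ident)
  also have "A \<Zsemi> mcopy = mcopy_n n \<Zsemi> (A \<otimes> A)"
    using mcopy_natural[of A] assms by (simp add: bfun_def mcopy_n_1)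
  also have "(mcopy_n n \<Zsemi> (A \<otimes> A)) \<otimes> B \<otimes> C = (mcopy_n n \<otimes> Ident n \<otimes> Ident n) \<Zsemi> ((A \<otimes> A) \<otimes> B \<otimes> C)"
    using assms by (simp add: bfun_def Tensor_Comp_Tensor Ident_Comp)
  finally show ?thesis by (simp add: Tensor_assoc)
qed

lemma btimes_bplus_distrib_left:
  assumes "bfun n A" "bfun n B" "bfun n C"
  shows "btimes n A (bplus n B C) = bplus n (btimes n A B) (btimes n A C)"
proof -
  have t: "mdom A = n" "mcod A = 1" "mdom B = n" "mcod B = 1" "mdom C = n" "mcod C = 1"
    using assms by (simp_all add: bfun_def)
  have distrib: "(Ident 1 \<otimes> madd) \<Zsemi> mand =
      (mcopy \<otimes> Ident 1 \<otimes> Ident 1) \<Zsemi> (Ident 1 \<otimes> Swap 1 1 \<otimes> Ident 1) \<Zsemi> (mand \<otimes> mand) \<Zsemi> madd"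
    using mand_madd_distrib by (simp add: Comp_assoc Tensor_assoc Ident_Tensor_Ident)
  have "btimes n A (bplus n B C) = mcopy_n n \<Zsemi> (Ident n \<otimes> mcopy_n n) \<Zsemi> (A \<otimes> B \<otimes> C) \<Zsemi> ((Ident 1 \<otimes> madd) \<Zsemi> mand)"
    using assms t by (simp add: binop_def[of n mand] Tensor_binop Comp_assoc)
  also have "\<dots> = mcopy_n n \<Zsemi> (Ident n \<otimes> mcopy_n n) \<Zsemi> ((A \<otimes> B \<otimes> C) \<Zsemi> (mcopy \<otimes> Ident 1 \<otimes> Ident 1))
      \<Zsemi> (Ident 1 \<otimes> Swap 1 1 \<otimes> Ident 1) \<Zsemi> (mand \<otimes> mand) \<Zsemi> madd"
    using t by (simp add: distrib Comp_assoc)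
  also have "\<dots> = mcopy_n n \<Zsemi> (Ident n \<otimes> mcopy_n n) \<Zsemi> (mcopy_n n \<otimes> Ident n \<otimes> Ident n)
      \<Zsemi> ((A \<otimes> A \<otimes> B \<otimes> C) \<Zsemi> (Ident 1 \<otimes> Swap 1 1 \<otimes> Ident 1)) \<Zsemi> (mand \<otimes> mand) \<Zsemi> madd"
    using Tensor_Comp_mcopy_Tensor[of n A B C] assms t by (simp add: Comp_assoc)
  also have "\<dots> = (mcopy_n n \<Zsemi> (Ident n \<otimes> mcopy_n n) \<Zsemi> (mcopy_n n \<otimes> Ident n \<otimes> Ident n) \<Zsemi> (Ident n \<otimes> Swap n n \<otimes> Ident n))
      \<Zsemi> (A \<otimes> B \<otimes> A \<otimes> C) \<Zsemi> (mand \<otimes> mand) \<Zsemi> madd"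
    using Swap_middle_natural[of A A B C] t by (simp add: Comp_assoc)
  also have "\<dots> = mcopy_n n \<Zsemi> ((mcopy_n n \<otimes> mcopy_n n) \<Zsemi> ((A \<otimes> B) \<otimes> (A \<otimes> C)) \<Zsemi> (mand \<otimes> mand)) \<Zsemi> madd"
    using t by (simp add: mcopy_n_interleave Comp_assoc Tensor_assoc)
  also have "\<dots> = bplus n (btimes n A B) (btimes n A C)"
    using t by (simp add: binop_def Tensor_Comp_Tensor)
  finally show ?thesis .
qed

lemma bplus_commute: "bfun n A \<Longrightarrow> bfun n B \<Longrightarrow> bplus n A B = bplus n B A"
  by (rule binop_commute) (simp_all add: madd_commute)

lemma btimes_commute: "bfun n A \<Longrightarrow> bfun n B \<Longrightarrow> btimes n A B = btimes n B A"
  by (rule binop_commute) (simp_all add: mand_commute)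

lemma bplus_assoc: "bfun n A \<Longrightarrow> bfun n B \<Longrightarrow> bfun n C \<Longrightarrow> bplus n (bplus n A B) C = bplus n A (bplus n B C)"
  by (rule binop_assoc) (simp_all add: madd_assoc)

lemma btimes_assoc: "bfun n A \<Longrightarrow> bfun n B \<Longrightarrow> bfun n C \<Longrightarrow> btimes n (btimes n A B) C = btimes n A (btimes n B C)"
  by (rule binop_assoc) (simp_all add: mand_assoc)

lemma bplus_bzero_left: "bfun n A \<Longrightarrow> bplus n (bzero n) A = A"
  unfolding bzero_def by (rule binop_unit) (simp_all add: madd_mzero)

lemma btimes_bone_left: "bfun n A \<Longrightarrow> btimes n (bone n) A = A"
  unfolding bone_def by (rule binop_unit) (simp_all add: mand_mone)

lemma bplus_bzero_right: "bfun n A \<Longrightarrow> bplus n A (bzero n) = A"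
  by (simp add: bplus_commute[of n A] bplus_bzero_left)

lemma btimes_bone_right: "bfun n A \<Longrightarrow> btimes n A (bone n) = A"
  by (simp add: btimes_commute[of n A] btimes_bone_left)

lemma btimes_bplus_distrib_right:
  "bfun n A \<Longrightarrow> bfun n B \<Longrightarrow> bfun n C \<Longrightarrow> btimes n (bplus n B C) A = bplus n (btimes n B A) (btimes n C A)"
  by (simp add: btimes_commute[of n _ A] btimes_bplus_distrib_left)

lemma btimes_bzero_right: "bfun n A \<Longrightarrow> btimes n A (bzero n) = bzero n"
  using btimes_bplus_distrib_left[of n A "bzero n" "bzero n"]
  by (simp add: bplus_bzero_left bplus_self)

lemma btimes_bzero_left: "bfun n A \<Longrightarrow> btimes n (bzero n) A = bzero n"
  by (simp add: btimes_commute[of n _ A] btimes_bzero_right)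

lemma btimes_btimes_distrib_left:
  "bfun n Y \<Longrightarrow> bfun n A \<Longrightarrow> bfun n B \<Longrightarrow> btimes n Y (btimes n A B) = btimes n (btimes n Y A) (btimes n Y B)"
  by (metis bfun_btimes btimes_assoc btimes_commute btimes_self)

section \<open>Completeness of E\<close>

definition bsubst1 :: "nat \<Rightarrow> bterm \<Rightarrow> bterm \<Rightarrow> bterm" where
  "bsubst1 k c s = bsubst (\<lambda>i. if i = k then c else BVar i) s"

lemma bsubst1_simps [simp]:
  "bsubst1 k c (BVar i) = (if i = k then c else BVar i)" "bsubst1 k c BZero = BZero" "bsubst1 k c BOne = BOne"
  "bsubst1 k c (BAdd a b) = BAdd (bsubst1 k c a) (bsubst1 k c b)" "bsubst1 k c (BMul a b) = BMul (bsubst1 k c a) (bsubst1 k c b)"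
  by (simp_all add: bsubst1_def)

lemma vars_below_bsubst1: "vars_below n s \<Longrightarrow> vars_below n c \<Longrightarrow> vars_below n (bsubst1 k c s)"
  by (induction s) auto

lemma vars_below_bsubst1_closed: "vars_below (Suc k) s \<Longrightarrow> vars_below 0 c \<Longrightarrow> vars_below k (bsubst1 k c s)"
  by (induction s) (auto intro: vars_below_mono)

lemma beval_bsubst1: "vars_below 0 c \<Longrightarrow> k < length xs \<Longrightarrow> beval xs (bsubst1 k c s) = beval (xs[k := beval [] c]) s"
proof (induction s)
  case (BVar i)
  have "beval xs c = beval [] c" using BVar.prems by (induction c) auto
  then show ?case using BVar by auto
qed auto

lemma btimes_den_bsubst1:
  assumes Y: "bfun n Y" and c: "vars_below 0 c" and k: "k < n"
    and base: "btimes n Y (den n (BVar k)) = btimes n Y (den n c)"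
  shows "vars_below n s \<Longrightarrow> btimes n Y (den n s) = btimes n Y (den n (bsubst1 k c s))"
proof (induction s)
  case (BVar i) then show ?case using base by auto
next
  case (BAdd a b)
  then show ?case
    using Y c vars_below_mono by (simp add: btimes_bplus_distrib_left vars_below_bsubst1)
next
  case (BMul a b)
  then show ?case
    using Y c vars_below_mono by (simp add: btimes_btimes_distrib_left vars_below_bsubst1)
qed auto

lemma den_shannon:
  assumes s: "vars_below n s" and k: "k < n"
  shows "den n s = bplus n (btimes n (den n (BVar k)) (den n (bsubst1 k BOne s)))
    (btimes n (bplus n (den n (BVar k)) (bone n)) (den n (bsubst1 k BZero s)))"
proof -
  define X where "X = den n (BVar k)"
  define X' where "X' = bplus n X (bone n)"
  have tX: "bfun n X" unfolding X_def by (rule bfun_den) (simp add: k)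
  have tX': "bfun n X'" using tX by (simp add: X'_def)
  have tS: "bfun n (den n s)" using s by simp
  have one: "bone n = bplus n X X'"
  proof -
    have "bplus n X X' = bplus n (bplus n X X) (bone n)"
      unfolding X'_def by (rule bplus_assoc[symmetric]) (simp_all add: tX)
    also have "\<dots> = bone n" using bplus_self[OF tX] bplus_bzero_left by simp
    finally show ?thesis ..
  qed
  have "den n s = btimes n (bone n) (den n s)" using btimes_bone_left[OF tS] by simp
  also have "\<dots> = bplus n (btimes n X (den n s)) (btimes n X' (den n s))"
    unfolding one by (rule btimes_bplus_distrib_right) (simp_all add: tX tX' tS)
  also have "btimes n X (den n s) = btimes n X (den n (bsubst1 k BOne s))"
  proof (rule btimes_den_bsubst1[OF tX _ k _ s])
    show "btimes n X (den n (BVar k)) = btimes n X (den n BOne)"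
      using btimes_self[OF tX] btimes_bone_right[OF tX] by (simp add: X_def)
  qed simp
  also have "btimes n X' (den n s) = btimes n X' (den n (bsubst1 k BZero s))"
  proof (rule btimes_den_bsubst1[OF tX' _ k _ s])
    have "btimes n X' X = bplus n (btimes n X X) (btimes n (bone n) X)"
      unfolding X'_def by (rule btimes_bplus_distrib_right) (simp_all add: tX)
    also have "\<dots> = bzero n"
      using btimes_self[OF tX] btimes_bone_left[OF tX] bplus_self[OF tX] by simp
    finally have "btimes n X' X = bzero n" .
    then show "btimes n X' (den n (BVar k)) = btimes n X' (den n BZero)"
      unfolding X_def[symmetric] using btimes_bzero_right[OF tX'] by simp
  qed simp
  finally show ?thesis unfolding X'_def X_def .
qed

lemma beval_closed: "vars_below 0 s \<Longrightarrow> beval xs s = beval [] s"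
  by (induction s) auto

lemma den_closed: "vars_below 0 s \<Longrightarrow> den n s = (if beval [] s then bone n else bzero n)"
proof (induction s)
  case (BAdd a b)
  then show ?case by (auto simp: bplus_bzero_left bplus_bzero_right bplus_self)
next
  case (BMul a b)
  then show ?case by (auto simp: btimes_bzero_right btimes_bzero_left btimes_bone_left)
qed auto

lemma den_eq_if_beval_eq_aux:
  "k \<le> n \<Longrightarrow> vars_below k s \<Longrightarrow> vars_below k t \<Longrightarrow>
    (\<forall>xs. length xs = n \<longrightarrow> beval xs s = beval xs t) \<Longrightarrow> den n s = den n t"
proof (induction k arbitrary: s t)
  case 0
  have "beval (replicate n False) s = beval (replicate n False) t" using 0 by simp
  then have "beval [] s = beval [] t" using beval_closed 0 by metis
  then show ?case using den_closed 0 by simp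
next
  case (Suc k)
  have k: "k < n" using Suc by simp
  have "den n (bsubst1 k c s) = den n (bsubst1 k c t)" if "vars_below 0 c" for c
  proof (rule Suc.IH)
    show "vars_below k (bsubst1 k c s)" "vars_below k (bsubst1 k c t)"
      using Suc.prems that vars_below_bsubst1_closed by auto
    show "\<forall>xs. length xs = n \<longrightarrow> beval xs (bsubst1 k c s) = beval xs (bsubst1 k c t)"
      using Suc.prems k that by (simp add: beval_bsubst1)
  qed (use Suc in simp)
  moreover have "vars_below n s" "vars_below n t" using Suc.prems vars_below_mono by blast+
  ultimately show ?case using den_shannon[of n s k] den_shannon[of n t k] k by simp
qed

lemma den_eq_if_beval_eq:
  "vars_below n s \<Longrightarrow> vars_below n t \<Longrightarrow>
    (\<forall>xs. length xs = n \<longrightarrow> beval xs s = beval xs t) \<Longrightarrow> den n s = den n t"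
  using den_eq_if_beval_eq_aux[of n n s t] by simp

theorem eqE_complete:
  assumes "typed p n m" "typed q n m" "\<forall>xs. length xs = n \<longrightarrow> sem p xs = sem q xs"
  shows "eqE p q"
proof -
  have w: "wf p" "wf q" "cdom p = n" "cdom q = n" "ccod p = m" "ccod q = m"
    using assms unfolding typed_def by auto
  have "mor_of p = mor_of q"
  proof (rule mor_of_eqI_den[OF w])
    show "\<forall>k<m. den n (out_term p k) = den n (out_term q k)"
    proof (intro allI impI)
      fix k assume k: "k < m"
      show "den n (out_term p k) = den n (out_term q k)"
      proof (rule den_eq_if_beval_eq)
        show "vars_below n (out_term p k)" using vars_below_out_term[of p k] w k by simp
        show "vars_below n (out_term q k)" using vars_below_out_term[of q k] w k by simp
        show "\<forall>xs. length xs = n \<longrightarrow> beval xs (out_term p k) = beval xs (out_term q k)"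
          using beval_out_term[of p _ k] beval_out_term[of q _ k] w k assms(3) by simp
      qed
    qed
  qed
  then show ?thesis using eqE_if_mor_of_eq w by simp
qed

theorem mainTheorem6:
  assumes "typed c a b" and "typed d a b"
    and "safe c" and "safe d"
    and "eqE c d"
  shows "eqE (Rt c) (Rt d)"
proof (rule eqE_complete)
  show "typed (Rt c) (a + b) a" "typed (Rt d) (a + b) a"
    using Rt_typing[of c] Rt_typing[of d] assms(1,2) unfolding typed_def by auto
  have "\<forall>xs. length xs = a \<longrightarrow> sem c xs = sem d xs"
    using eqE_sem_eq[OF assms(5)] assms(1) unfolding sem_eq_def typed_def by simp
  then show "\<forall>zs. length zs = a + b \<longrightarrow> sem (Rt c) zs = sem (Rt d) zs"
    using safe_sem_Rt_cong[OF assms(1-4)] by blast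
qed

end
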